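(* Let $k\in\frac12+\mathbb Z$ with $k>\frac52$, let $N\in 4\mathbb N$, let $f\in S_k(\Gamma_0^*(N))$ (i.e. $f$ is a cusp form of weight $k$ for $\Gamma_0(N)$ with $f|_kW_N=f$), and let $a\in[0,2k-\frac92]$. For $z,w\in\mathfrak H$ put $$\Phi_a(z,w)=\sum_{n=0}^{k-5/2}\left[\binom{k-2}{n}(iNz)^n w^{a-n}+\frac{i^k}{N^{1/4}}\binom{k-2}{n+\frac12}(iz)^n(-Nw)^{2k-\frac92-a-n}\right],$$ $$P_a(z)=\int_0^{i\infty}f(w)\Phi_a(z,w)\,dw,\qquad F_a(z)=\int_z^{i\infty}f(w)\Phi_a(z,w)\,dw .$$ Then: (i) For all $z\in\mathfrak H$, $-i^{k-5/2}\,(F_a|_{5/2-k}W_N)(z)+F_a(z)=P_a(z)$. Consequently, if $\chi$ is a character of $\Gamma_0^*(N)$ with $\chi(W_N)=i^{\frac52-k}$, then $P_a|_{5/2-k,\chi}(W_N+1)=0$; in particular, if $4\mid (k-\frac52)$, then $P_a|_{5/2-k}(W_N+1)=0$. (ii) $P_a$ is a polynomial of degree at most $k-\frac52$, and for every $z\in\mathbb C$, $$P_a(z)=i^{a+1}\sum_{n=0}^{k-5/2}\left[\binom{k-2}{n}N^n\Lambda_f(a+1-n)+\binom{k-2}{n+\frac12}N^{2k-a-n-\frac{19}{4}}\,i^{2n-k+\frac12}\,\Lambda_f\!\left(2k-\tfrac72-a-n\right)\right]z^n.$$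
   Context: All complex powers use the principal branch of the logarithm, with $-\pi<\arg z\le\pi$; in particular $i^t=e^{i\pi t/2}$ for real $t$. $\mathfrak H$ is the upper half-plane. For $z,w\in\mathbb C$, $\binom{z}{w}:=\frac{\Gamma(z+1)}{\Gamma(w+1)\Gamma(z-w+1)}$. Half-integral weight action: for odd $d$, $\epsilon_d=1$ if $d\equiv1\pmod 4$ and $\epsilon_d=i$ if $d\equiv 3\pmod 4$; $\left(\frac cd\right)$ is the Kronecker symbol. For $k\in\frac12+\mathbb Z$ and $\gamma=\begin{pmatrix}*&*\\c&d\end{pmatrix}\in\Gamma_0(N)$, $(f|_k\gamma)(z)=\left(\frac cd\right)\epsilon_d^{2k}(cz+d)^{-k}f(\gamma z)$. With $W_N=\begin{pmatrix}0&-1/\sqrt N\\ \sqrt N&0\end{pmatrix}$, $(f|_kW_N)(z)=(-i\sqrt N z)^{-k}f(-1/(Nz))$. $\Gamma_0^*(N)=\langle\Gamma_0(N),W_N\rangle$. $S_k(\Gamma_0^*(N))$ denotes the holomorphic cusp forms $f$ on $\mathfrak H$ with $f|_k\gamma=f$ for all $\gamma\in\Gamma_0(N)$ and $f|_kW_N=f$. Actions extend linearly to the group ring. Integral weight action: for $m\in\mathbb Z$ and $\gamma=\begin{pmatrix}*&*\\c&d\end{pmatrix}\in \mathrm{SL}_2(\mathbb R)$, $(F|_m\gamma)(z)=(cz+d)^{-m}F(\gamma z)$; thus $(F|_{5/2-k}W_N)(z)=(\sqrt N z)^{k-5/2}F(-1/(Nz))$. For a character $\chi$, $F|_{m,\chi}\gamma:=\overline{\chi(\gamma)}\,F|_m\gamma$.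 $L$-series: for $f(z)=\sum_{n\ge1}a_f(n)e^{2\pi i n z}$, $\Lambda_f(s)=\int_0^\infty f(it)t^{s-1}\,dt=(2\pi)^{-s}\Gamma(s)\sum_{n\ge1}a_f(n)n^{-s}$, extended to an entire function. *)

theory Defs
  imports "HOL-Analysis.Analysis" "HOL-Number_Theory.Number_Theory"
          "HOL-Computational_Algebra.Polynomial"
begin

definition upper_half_plane :: "complex set" where
  "upper_half_plane = {z. Im z > 0}"

definition gbinom :: "real \<Rightarrow> real \<Rightarrow> real" where
  "gbinom z w = Gamma (z + 1) / (Gamma (w + 1) * Gamma (z - w + 1))"

definition jacobi :: "int \<Rightarrow> nat \<Rightarrow> int" where
  "jacobi c n = (\<Prod>p\<in>prime_factors n. Legendre c (int p) ^ multiplicity p n)"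

text \<open>Kronecker symbol (c/d) for odd d (the only case used): (c/d) = (c/-1)^[d<0] (c/|d|),
  where (c/-1) = -1 if c < 0 and 1 otherwise.\<close>
definition kronecker :: "int \<Rightarrow> int \<Rightarrow> int" where
  "kronecker c d = (if d < 0 \<and> c < 0 then -1 else 1) * jacobi c (nat \<bar>d\<bar>)"

definition eps :: "int \<Rightarrow> complex" where
  "eps d = (if d mod 4 = 1 then 1 else \<i>)"

definition Gamma0 :: "nat \<Rightarrow> (int \<times> int \<times> int \<times> int) set" where
  "Gamma0 N = {(a,b,c,d). a * d - b * c = 1 \<and> int N dvd c}"

definition SL2Z :: "(int \<times> int \<times> int \<times> int) set" where
  "SL2Z = {(a,b,c,d). a * d - b * c = 1}"

definition slash_half :: "real \<Rightarrow> int \<times> int \<times> int \<times> int \<Rightarrow> (complex \<Rightarrow> complex) \<Rightarrow> complex \<Rightarrow> complex" where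
  "slash_half k \<gamma> f z = (case \<gamma> of (a,b,c,d) \<Rightarrow>
      of_int (kronecker c d) * eps d powr (of_real (2 * k)) *
      (of_int c * z + of_int d) powr (- of_real k) *
      f ((of_int a * z + of_int b) / (of_int c * z + of_int d)))"

definition slash_half_W :: "real \<Rightarrow> nat \<Rightarrow> (complex \<Rightarrow> complex) \<Rightarrow> complex \<Rightarrow> complex" where
  "slash_half_W k N f z = (- \<i> * of_real (sqrt (real N)) * z) powr (- of_real k) * f (- 1 / (of_nat N * z))"

text \<open>Cusp form of weight k for Gamma_0^*(N): holomorphic on H, invariant under Gamma_0(N)
  and W_N, and vanishing at every cusp: for every sigma in SL_2(Z),
  (cz+d)^(-k) f(sigma z) tends to 0 as Im z tends to infinity, uniformly in Re z.\<close>
definition cusp_form_star :: "real \<Rightarrow> nat \<Rightarrow> (complex \<Rightarrow> complex) \<Rightarrow> bool" where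
  "cusp_form_star k N f \<longleftrightarrow>
     f holomorphic_on upper_half_plane \<and>
     (\<forall>\<gamma>\<in>Gamma0 N. \<forall>z\<in>upper_half_plane. slash_half k \<gamma> f z = f z) \<and>
     (\<forall>z\<in>upper_half_plane. slash_half_W k N f z = f z) \<and>
     (\<forall>(a,b,c,d)\<in>SL2Z. \<forall>e>0. \<exists>Y. \<forall>z. Im z > Y \<longrightarrow>
        norm ((of_int c * z + of_int d) powr (- of_real k) *
              f ((of_int a * z + of_int b) / (of_int c * z + of_int d))) < e)"

definition Lambda :: "(complex \<Rightarrow> complex) \<Rightarrow> complex \<Rightarrow> complex" where
  "Lambda f s = (LBINT t:{0<..}. f (\<i> * of_real t) * (of_real t) powr (s - 1))"

type_synonym mat2 = "real \<times> real \<times> real \<times> real"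

definition mmul :: "mat2 \<Rightarrow> mat2 \<Rightarrow> mat2" where
  "mmul m1 m2 = (case m1 of (a,b,c,d) \<Rightarrow> case m2 of (a',b',c',d') \<Rightarrow>
     (a*a' + b*c', a*b' + b*d', c*a' + d*c', c*b' + d*d'))"

definition mat_of_int :: "int \<times> int \<times> int \<times> int \<Rightarrow> mat2" where
  "mat_of_int \<gamma> = (case \<gamma> of (a,b,c,d) \<Rightarrow> (of_int a, of_int b, of_int c, of_int d))"

definition idmat :: mat2 where "idmat = (1, 0, 0, 1)"

definition WN :: "nat \<Rightarrow> mat2" where
  "WN N = (0, - 1 / sqrt (real N), sqrt (real N), 0)"

inductive_set Gamma0_star :: "nat \<Rightarrow> mat2 set" for N where
  gen: "\<gamma> \<in> Gamma0 N \<Longrightarrow> mat_of_int \<gamma> \<in> Gamma0_star N"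
| fricke: "WN N \<in> Gamma0_star N"
| mult: "g \<in> Gamma0_star N \<Longrightarrow> h \<in> Gamma0_star N \<Longrightarrow> mmul g h \<in> Gamma0_star N"

definition is_character :: "nat \<Rightarrow> (mat2 \<Rightarrow> complex) \<Rightarrow> bool" where
  "is_character N chi \<longleftrightarrow>
     (\<forall>g\<in>Gamma0_star N. chi g \<noteq> 0) \<and>
     (\<forall>g\<in>Gamma0_star N. \<forall>h\<in>Gamma0_star N. chi (mmul g h) = chi g * chi h)"

text \<open>Integral weight action (F|_m gamma)(z) = (cz+d)^(-m) F(gamma z); the weight is integral
  in all uses, where powr agrees with the integer power.\<close>
definition slash_int :: "real \<Rightarrow> mat2 \<Rightarrow> (complex \<Rightarrow> complex) \<Rightarrow> complex \<Rightarrow> complex" where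
  "slash_int m \<gamma> F z = (case \<gamma> of (a,b,c,d) \<Rightarrow>
     (of_real c * z + of_real d) powr (- of_real m) *
     F ((of_real a * z + of_real b) / (of_real c * z + of_real d)))"

definition slash_int_chi :: "real \<Rightarrow> (mat2 \<Rightarrow> complex) \<Rightarrow> mat2 \<Rightarrow> (complex \<Rightarrow> complex) \<Rightarrow> complex \<Rightarrow> complex" where
  "slash_int_chi m chi \<gamma> F z = cnj (chi \<gamma>) * slash_int m \<gamma> F z"

definition Phi :: "real \<Rightarrow> nat \<Rightarrow> real \<Rightarrow> complex \<Rightarrow> complex \<Rightarrow> complex" where
  "Phi k N a z w = (\<Sum>n = 0..nat \<lfloor>k - 5/2\<rfloor>.
      of_real (gbinom (k - 2) (real n)) * (\<i> * of_nat N * z) ^ n * w powr (of_real (a - real n))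
    + \<i> powr (of_real k) / of_real (real N powr (1/4)) * of_real (gbinom (k - 2) (real n + 1/2))
      * (\<i> * z) ^ n * (- of_nat N * w) powr (of_real (2 * k - 9/2 - a - real n)))"

text \<open>P_a(z) = int_0^{i infty} f(w) Phi_a(z,w) dw, along the imaginary axis w = it.\<close>
definition Pa :: "real \<Rightarrow> nat \<Rightarrow> real \<Rightarrow> (complex \<Rightarrow> complex) \<Rightarrow> complex \<Rightarrow> complex" where
  "Pa k N a f z = (LBINT t:{0<..}. f (\<i> * of_real t) * Phi k N a z (\<i> * of_real t) * \<i>)"

text \<open>F_a(z) = int_z^{i infty} f(w) Phi_a(z,w) dw, along the vertical ray w = z + it.\<close>
definition Fa :: "real \<Rightarrow> nat \<Rightarrow> real \<Rightarrow> (complex \<Rightarrow> complex) \<Rightarrow> complex \<Rightarrow> complex" where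
  "Fa k N a f z = (LBINT t:{0<..}. f (z + \<i> * of_real t) * Phi k N a z (z + \<i> * of_real t) * \<i>)"

end

theory Submission
  imports Defs "HOL-Real_Asymp.Real_Asymp" "HOL-Complex_Analysis.Complex_Analysis"
begin

(* Write g_z(w) = f(w) Phi_a(z,w) and let G_z be a primitive of g_z on the upper half-plane.
   Then F_a(z) = G_z(i oo) - G_z(z) and P_a(z) = G_z(i oo) - G_z(0), the boundary values being
   limits along vertical rays; they exist because f decays like exp(-2 pi Im w) at every cusp
   (Schwarz's lemma applied to f as a function of q = exp(2 pi i w)).
   The kernel is chosen so that f(w) Phi_a(z,w) dw is invariant under the Fricke involution
   (z,w) -> (-1/(Nz), -1/(Nw)) up to the factor i^m (sqrt N z)^m, m = k - 5/2: this uses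
   f|_k W_N = f and the symmetry binom(k-2, n) = binom(k-2, m - n + 1/2). Hence
   G_z(s) - i^m (sqrt N z)^m G_{-1/(Nz)}(-1/(Ns)) is constant in s, and comparing s = z with
   s -> 0 gives (i). Applying (i) at z and at -1/(Nz) gives the W_N + 1 relation.
   Finally Phi_a(z, it) is a sum of monomials z^n t^c, so integrating term by term turns
   P_a into a polynomial whose coefficients are values of Lambda_f. *)

lemma gbinom_symmetric: "gbinom z (z - w) = gbinom z w"
  unfolding gbinom_def by (simp add: mult.commute)

lemma Im_Ln_div_2pi_i: "q \<noteq> 0 \<Longrightarrow> Im (Ln q / (2 * pi * \<i>)) = - ln (norm q) / (2 * pi)"
  by (simp add: Im_divide Re_Ln field_simps power2_eq_square)

lemma norm_powr_of_real: "norm (x powr complex_of_real c) = norm x powr c"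
  by (simp add: norm_powr_real_powr')

lemma Im_fricke_pos:
  assumes "N > 0" "Im z > 0" shows "Im (- 1 / (of_nat N * z)) > 0"
proof -
  have nz: "of_nat N * z \<noteq> 0" using assms by auto
  have "Im (- 1 / (of_nat N * z)) = real N * Im z / (cmod (of_nat N * z))^2"
    by (simp add: Im_divide cmod_power2 power_mult_distrib)
  also have "\<dots> > 0" using assms nz by (intro divide_pos_pos) auto
  finally show ?thesis .
qed

lemma closed_segment_vertical_bounds:
  fixes z w :: complex
  assumes z: "Im z > 0" and T: "T > 0" and w: "w \<in> closed_segment (\<i> * of_real T) (z + \<i> * of_real T)"
  shows "Im w \<ge> T \<and> norm w \<le> norm z + T"
proof -
  obtain u where u: "0 \<le> u" "u \<le> 1" and w: "w = (1 - u) *\<^sub>R (\<i> * of_real T) + u *\<^sub>R (z + \<i> * of_real T)"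
    using w unfolding in_segment(1) by blast
  have w': "w = \<i> * of_real T + of_real u * z"
    unfolding w scaleR_conv_of_real by (simp add: algebra_simps)
  have "Im w = T + u * Im z" unfolding w' by simp
  moreover have "u * Im z \<ge> 0" using u z by simp
  moreover have "norm w \<le> norm (\<i> * of_real T) + norm (of_real u * z)"
    unfolding w' by (rule norm_triangle_ineq)
  moreover have "norm (\<i> * of_real T) = T" using T by (simp add: norm_mult)
  moreover have "norm (of_real u * z) = u * norm z" using u by (simp add: norm_mult)
  moreover have "u * norm z \<le> norm z" using u by (simp add: mult_left_le_one_le)
  ultimately show ?thesis by linarith
qed

lemma Schwarz_Lemma_ball:
  fixes g :: "complex \<Rightarrow> complex"
  assumes r: "r > 0" and hol: "g holomorphic_on ball 0 r" and g0: "g 0 = 0"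
    and bound: "\<And>q. norm q < r \<Longrightarrow> norm (g q) < 1" and q: "norm q < r"
  shows "norm (g q) \<le> norm q / r"
proof -
  define F where "F \<xi> = g (of_real r * \<xi>)" for \<xi>
  have "(\<lambda>\<xi>::complex. of_real r * \<xi>) ` ball 0 1 \<subseteq> ball 0 r"
    using r by (auto simp: norm_mult)
  then have "g \<circ> (\<lambda>\<xi>. of_real r * \<xi>) holomorphic_on ball 0 1"
    by (intro holomorphic_on_compose_gen[OF _ hol] holomorphic_intros)
  then have F_hol: "F holomorphic_on ball 0 1" by (simp add: F_def[abs_def] o_def)
  have F_bound: "norm (F \<xi>) < 1" if "norm \<xi> < 1" for \<xi>
    unfolding F_def using r that by (intro bound) (simp add: norm_mult)
  have "norm (F (q / of_real r)) \<le> norm (q / of_real r)"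
    by (rule Schwarz_Lemma(1)[OF F_hol _ F_bound]) (use g0 q r in \<open>auto simp: F_def norm_divide\<close>)
  then show ?thesis using r by (simp add: F_def norm_divide)
qed

lemma cnj_i_powr: "cnj (\<i> powr (complex_of_real x)) = \<i> powr (complex_of_real (- x))"
  by (simp add: powr_def exp_cnj Ln_ii)

lemma slash_int_idmat: "slash_int x idmat F z = F z"
  unfolding slash_int_def idmat_def by simp

lemma character_idmat: assumes "is_character N chi" shows "chi idmat = 1"
proof -
  have "(1, 0, 0, 1) \<in> Gamma0 N" by (simp add: Gamma0_def)
  then have "mat_of_int (1, 0, 0, 1) \<in> Gamma0_star N" by (rule Gamma0_star.gen)
  then have I: "idmat \<in> Gamma0_star N" by (simp add: mat_of_int_def idmat_def)
  have "mmul idmat idmat = idmat" by (simp add: mmul_def idmat_def)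
  then have "chi idmat = chi idmat * chi idmat" using assms I unfolding is_character_def by metis
  moreover have "chi idmat \<noteq> 0" using assms I unfolding is_character_def by blast
  ultimately show ?thesis by (metis mult_cancel_left1)
qed

section \<open>Improper integrals on half-lines\<close>

lemma set_integrable_atLeast_exp_bound:
  fixes h :: "real \<Rightarrow> complex"
  assumes cont: "continuous_on {c..} h" and a: "a > 0"
    and bnd: "\<And>t. t \<ge> T \<Longrightarrow> norm (h t) \<le> B * exp (- a * t)"
  shows "set_integrable lborel {c..} h"
proof -
  define T' where "T' = max c T"
  have eq: "{c..} = {c..T'} \<union> {T'..}" by (auto simp: T'_def)
  have i1: "set_integrable lborel {c..T'} h"
    by (rule borel_integrable_atLeastAtMost') (rule continuous_on_subset[OF cont], auto)
  have "(\<lambda>x. exp (- a * x)) integrable_on {T'..}" using integrable_on_exp_minus_to_infinity[OF a] by blast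
  then have "set_integrable lebesgue {T'..} (\<lambda>x. exp (- a * x))"
    by (intro nonnegative_absolutely_integrable_1) auto
  then have "set_integrable lborel {T'..} (\<lambda>x. exp (- a * x))"
    unfolding set_integrable_def by (subst (asm) integrable_completion) measurable
  then have ie: "set_integrable lborel {T'..} (\<lambda>x. B * exp (- a * x))"
    by (rule set_integrable_mult_right)
  have "continuous_on {T'..} h" by (rule continuous_on_subset[OF cont]) (auto simp: T'_def)
  then have "set_borel_measurable borel {T'..} h" by (intro set_measurable_continuous_on) auto
  then have meas: "set_borel_measurable lborel {T'..} h" by (simp add: set_borel_measurable_def)
  have i2: "set_integrable lborel {T'..} h"
  proof (rule set_integrable_bound[OF ie meas])
    show "AE x in lborel. x \<in> {T'..} \<longrightarrow> norm (h x) \<le> norm (B * exp (- a * x))"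
    proof (rule AE_I2, rule impI)
      fix x assume "x \<in> {T'..}"
      then have "norm (h x) \<le> B * exp (- a * x)" using bnd by (auto simp: T'_def)
      also have "\<dots> \<le> norm (B * exp (- a * x))" by simp
      finally show "norm (h x) \<le> norm (B * exp (- a * x))" .
    qed
  qed
  show ?thesis unfolding eq by (rule set_integrable_Un[OF i1 i2]) auto
qed

lemma set_integrable_greaterThanAtMost_bounded_at_0:
  fixes h :: "real \<Rightarrow> complex"
  assumes cont: "continuous_on {0<..c} h" and c: "c > 0"
    and ev: "eventually (\<lambda>t. norm (h t) \<le> 1) (at_right 0)"
  shows "set_integrable lborel {0<..c} h"
proof -
  obtain \<delta> where d: "\<delta> > 0" "\<And>t. t > 0 \<Longrightarrow> t < \<delta> \<Longrightarrow> norm (h t) \<le> 1"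
    using ev unfolding eventually_at_right_field by auto
  define d' where "d' = min \<delta> c / 2"
  have d'0: "d' > 0" "d' < \<delta>" "d' < c" using d c by (auto simp: d'_def)
  have eq: "{0<..c} = {0<..d'} \<union> {d'..c}" using d'0 by auto
  have i1: "set_integrable lborel {d'..c} h"
    by (rule borel_integrable_atLeastAtMost') (rule continuous_on_subset[OF cont], use d'0 in auto)
  have "set_integrable lborel {0..d'} (\<lambda>x. 1::real)"
    by (rule borel_integrable_atLeastAtMost') simp
  then have ic: "set_integrable lborel {0<..d'} (\<lambda>x. 1::real)"
    by (rule set_integrable_subset) auto
  have "continuous_on {0<..d'} h" by (rule continuous_on_subset[OF cont]) (use d'0 in auto)
  then have "set_borel_measurable borel {0<..d'} h" by (intro set_measurable_continuous_on) auto
  then have meas: "set_borel_measurable lborel {0<..d'} h" by (simp add: set_borel_measurable_def)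
  have i2: "set_integrable lborel {0<..d'} h"
    by (rule set_integrable_bound[OF ic meas]) (use d d'0 in \<open>intro AE_I2, auto\<close>)
  show ?thesis unfolding eq by (rule set_integrable_Un[OF i2 i1]) auto
qed

lemma set_integral_Icc_FTC:
  fixes F h :: "real \<Rightarrow> complex"
  assumes "c \<le> d" and der: "\<And>t. t \<in> {c..d} \<Longrightarrow> (F has_vector_derivative h t) (at t)"
    and cont: "continuous_on {c..d} h"
  shows "(LBINT t:{c..d}. h t) = F d - F c"
proof -
  have "(LBINT t=c..d. h t) = F d - F c"
    by (rule interval_integral_FTC_finite)
       (use assms in \<open>auto simp: min_def max_def intro: has_vector_derivative_at_within\<close>)
  then show ?thesis using assms(1) by (simp add: interval_integral_Icc)
qed

lemma tendsto_at_top_FTC: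
  fixes F h :: "real \<Rightarrow> complex"
  assumes der: "\<And>t. t \<ge> c \<Longrightarrow> (F has_vector_derivative h t) (at t)"
    and cont: "continuous_on {c..} h" and int: "set_integrable lborel {c..} h"
  shows "(F \<longlongrightarrow> F c + (LBINT t:{c..}. h t)) at_top"
proof -
  have lim: "((\<lambda>b. LBINT t:{c..b}. h t) \<longlongrightarrow> (LBINT t:{c..}. h t)) at_top"
    by (rule tendsto_set_lebesgue_integral_at_top[OF _ int]) auto
  have "eventually (\<lambda>b. F c + (LBINT t:{c..b}. h t) = F b) at_top"
  proof (rule eventually_at_top_linorderI[of c])
    fix b assume "b \<ge> c"
    then have "(LBINT t:{c..b}. h t) = F b - F c"
      by (intro set_integral_Icc_FTC der) (auto intro: continuous_on_subset[OF cont])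
    then show "F c + (LBINT t:{c..b}. h t) = F b" by simp
  qed
  then show ?thesis by (rule Lim_transform_eventually[OF tendsto_add[OF tendsto_const lim]])
qed

lemma tendsto_at_right_0_FTC:
  fixes F h :: "real \<Rightarrow> complex"
  assumes c: "c > 0" and der: "\<And>t. t \<in> {0<..c} \<Longrightarrow> (F has_vector_derivative h t) (at t)"
    and cont: "continuous_on {0<..c} h" and int: "set_integrable lborel {0<..c} h"
  shows "(F \<longlongrightarrow> F c - (LBINT t:{0<..c}. h t)) (at_right 0)"
proof -
  have lim: "((\<lambda>a. LBINT t:{a..c}. h t) \<longlongrightarrow> (LBINT t:{0<..c}. h t)) (at_right 0)"
    by (rule tendsto_set_lebesgue_integral_at_right[OF c _ int]) auto
  have "eventually (\<lambda>a. F c - (LBINT t:{a..c}. h t) = F a) (at_right 0)"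
    unfolding eventually_at_right_field
  proof (rule exI[of _ c], intro conjI allI impI)
    show "0 < c" by (rule c)
    fix a assume a: "0 < a" "a < c"
    then have "(LBINT t:{a..c}. h t) = F c - F a"
      by (intro set_integral_Icc_FTC der) (auto intro: continuous_on_subset[OF cont])
    then show "F c - (LBINT t:{a..c}. h t) = F a" by simp
  qed
  then show ?thesis by (rule Lim_transform_eventually[OF tendsto_diff[OF tendsto_const lim]])
qed

lemma set_integrable_sum:
  fixes g :: "'i \<Rightarrow> real \<Rightarrow> complex"
  assumes "\<And>i. i \<in> I \<Longrightarrow> set_integrable M A (g i)"
  shows "set_integrable M A (\<lambda>x. \<Sum>i\<in>I. g i x)"
  using assms unfolding set_integrable_def by (simp add: scaleR_sum_right)

lemma set_integral_sum:
  fixes g :: "'i \<Rightarrow> real \<Rightarrow> complex"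
  assumes "\<And>i. i \<in> I \<Longrightarrow> set_integrable M A (g i)"
  shows "(LINT x:A|M. (\<Sum>i\<in>I. g i x)) = (\<Sum>i\<in>I. LINT x:A|M. g i x)"
  using assms unfolding set_integrable_def set_lebesgue_integral_def
  by (simp add: scaleR_sum_right Bochner_Integration.integral_sum)

section \<open>The Fricke transformation of the kernel\<close>

text \<open>Every factor occurring in the kernel identity is brought into the form
  \<open>exp (p + q Ln s + r i)\<close>; products then add exponents, and the principal-branch conventions
  only enter through the admissible range of \<open>r\<close> (see \<open>exp_powr_complex\<close>).\<close>

definition exp_form :: "real \<Rightarrow> real \<Rightarrow> real \<Rightarrow> complex \<Rightarrow> complex" where
  "exp_form p q r L = exp (complex_of_real p + complex_of_real q * L + complex_of_real r * \<i>)"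

lemma exp_form_mult: "exp_form p q r L * exp_form p' q' r' L = exp_form (p + p') (q + q') (r + r') L"
  unfolding exp_form_def by (simp add: exp_add[symmetric] algebra_simps)

lemma exp_form_inverse: "1 / exp_form p q r L = exp_form (- p) (- q) (- r) L"
  unfolding exp_form_def by (simp add: exp_minus[symmetric] divide_inverse algebra_simps)

lemma exp_form_minus_2pi: "exp_form p q (r - 2 * pi) L = exp_form p q r L"
proof -
  have "exp_form p q (r - 2 * pi) L = exp_form p q r L * exp (- (2 * pi * \<i>))"
    unfolding exp_form_def by (simp add: exp_add[symmetric] algebra_simps)
  also have "exp (- (2 * pi * \<i>)) = 1" by (simp add: exp_minus)
  finally show ?thesis by simp
qed

lemma exp_form_cong: "p = p' \<Longrightarrow> q = q' \<Longrightarrow> r = r' \<Longrightarrow> exp_form p q r L = exp_form p' q' r' L"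
  by simp

lemma exp_form_neg_i_powr: "(- \<i>) powr (complex_of_real c) = exp_form 0 0 (- c * pi / 2) L"
  unfolding exp_form_def powr_def by (simp add: algebra_simps)

context
  fixes s :: complex and N :: nat
  assumes s: "Im s > 0" and N: "N > 0"
begin

private lemma Im_Ln_bounds: "0 < Im (Ln s)" "Im (Ln s) < pi"
  using Im_Ln_pos_lt_imp[OF s] by auto

private lemma nonzero: "s \<noteq> 0"
  using s by auto

private lemma exp_ln_N: "exp (complex_of_real (ln (real N))) = of_nat N"
  using N by (simp add: exp_of_real)

private lemma sqrt_N_eq_exp: "complex_of_real (sqrt (real N)) = exp (complex_of_real (ln (real N) / 2))"
proof -
  have "sqrt (real N) = exp (ln (real N) / 2)"
    using N by (simp add: powr_half_sqrt[symmetric] powr_def)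
  then show ?thesis by (simp add: exp_of_real[symmetric])
qed

lemma exp_form_s_powr: "s powr (complex_of_real c) = exp_form 0 c 0 (Ln s)"
  using nonzero unfolding exp_form_def powr_def by (simp add: mult.commute)

lemma exp_form_neg_N_s_powr:
  "(- of_nat N * s) powr (complex_of_real c) = exp_form (c * ln (real N)) c (- c * pi) (Ln s)"
proof -
  define E where "E = of_real (ln (real N)) + Ln s - of_real pi * \<i>"
  have "- of_nat N * s = exp E"
    using nonzero exp_ln_N unfolding E_def by (auto simp: exp_add exp_diff exp_minus)
  then have "(- of_nat N * s) powr (complex_of_real c) = exp (E * of_real c)"
    by (simp only:) (rule exp_powr_complex, use Im_Ln_bounds in \<open>auto simp: E_def\<close>)
  then show ?thesis unfolding exp_form_def E_def by (simp add: algebra_simps)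
qed

lemma exp_form_fricke_s_powr:
  "(- 1 / (of_nat N * s)) powr (complex_of_real c) = exp_form (- c * ln (real N)) (- c) (c * pi) (Ln s)"
proof -
  define E where "E = - of_real (ln (real N)) - Ln s + of_real pi * \<i>"
  have "- 1 / (of_nat N * s) = exp E"
    using nonzero exp_ln_N N unfolding E_def by (auto simp: exp_add exp_diff exp_minus field_simps)
  then have "(- 1 / (of_nat N * s)) powr (complex_of_real c) = exp (E * of_real c)"
    by (simp only:) (rule exp_powr_complex, use Im_Ln_bounds in \<open>auto simp: E_def\<close>)
  then show ?thesis unfolding exp_form_def E_def by (simp add: algebra_simps)
qed

lemma exp_form_neg_N_fricke_s_powr:
  "(- of_nat N * (- 1 / (of_nat N * s))) powr (complex_of_real c) = exp_form 0 (- c) 0 (Ln s)"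
proof -
  have "- of_nat N * (- 1 / (of_nat N * s)) = exp (- Ln s)"
    using nonzero N by (auto simp: exp_minus field_simps)
  then have "(- of_nat N * (- 1 / (of_nat N * s))) powr (complex_of_real c) = exp ((- Ln s) * of_real c)"
    by (simp only:) (rule exp_powr_complex, use Im_Ln_bounds in auto)
  then show ?thesis unfolding exp_form_def by (simp add: algebra_simps)
qed

lemma exp_form_fricke_weight_powr:
  "(- \<i> * of_real (sqrt (real N)) * s) powr (complex_of_real c)
     = exp_form (c * ln (real N) / 2) c (- c * pi / 2) (Ln s)"
proof -
  define E where "E = of_real (ln (real N) / 2) + Ln s - of_real (pi / 2) * \<i>"
  have "exp (- (of_real (pi / 2) * \<i>)) = - \<i>"
    by (simp add: exp_minus) (simp add: exp_eq_polar cis_conv_exp[symmetric])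
  moreover have "exp E = exp (of_real (ln (real N) / 2)) * exp (Ln s) * exp (- (of_real (pi / 2) * \<i>))"
    unfolding E_def by (simp only: diff_conv_add_uminus exp_add)
  ultimately have "- \<i> * of_real (sqrt (real N)) * s = exp E"
    using nonzero by (auto simp: sqrt_N_eq_exp)
  then have "(- \<i> * of_real (sqrt (real N)) * s) powr (complex_of_real c) = exp (E * of_real c)"
    by (simp only:) (rule exp_powr_complex, use Im_Ln_bounds in \<open>auto simp: E_def\<close>)
  then show ?thesis unfolding exp_form_def E_def by (simp add: algebra_simps)
qed

lemma exp_form_i_powr: "\<i> powr (complex_of_real c) = exp_form 0 0 (c * pi / 2) (Ln s)"
  unfolding exp_form_def powr_def by (simp add: Ln_ii algebra_simps)

lemma exp_form_N_powr: "complex_of_real (real N powr x) = exp_form (x * ln (real N)) 0 0 (Ln s)"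
  using N unfolding exp_form_def powr_def by (simp add: exp_of_real[symmetric] algebra_simps)

lemma exp_form_inverse_N_powr: "1 / complex_of_real (real N powr x) = exp_form (- x * ln (real N)) 0 0 (Ln s)"
  using N unfolding exp_form_def powr_def
  by (simp add: exp_of_real[symmetric] exp_minus algebra_simps divide_inverse)

lemma exp_form_i_power: "\<i> ^ n = exp_form 0 0 (real n * pi / 2) (Ln s)"
proof -
  have "\<i> = exp (of_real (pi / 2) * \<i>)" by (simp add: exp_eq_polar cis_conv_exp[symmetric])
  then have "\<i> ^ n = exp (of_nat n * (of_real (pi / 2) * \<i>))" by (metis exp_of_nat_mult)
  then show ?thesis unfolding exp_form_def by (simp add: algebra_simps)
qed

lemma exp_form_neg_i_power: "(- \<i>) ^ n = exp_form 0 0 (- real n * pi / 2) (Ln s)"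
proof -
  have "- \<i> = exp (of_real (- pi / 2) * \<i>)" by (simp add: exp_eq_polar cis_conv_exp[symmetric])
  then have "(- \<i>) ^ n = exp (of_nat n * (of_real (- pi / 2) * \<i>))" by (metis exp_of_nat_mult)
  then show ?thesis unfolding exp_form_def by (simp add: algebra_simps)
qed

lemma exp_form_N_power: "of_nat N ^ n = exp_form (real n * ln (real N)) 0 0 (Ln s)"
proof -
  have "(of_nat N :: complex) ^ n = exp (of_nat n * of_real (ln (real N)))"
    by (metis exp_ln_N exp_of_nat_mult)
  then show ?thesis unfolding exp_form_def by (simp add: algebra_simps)
qed

lemma exp_form_sqrt_N_power:
  "complex_of_real (sqrt (real N)) ^ n = exp_form (real n * ln (real N) / 2) 0 0 (Ln s)"
proof -
  have "complex_of_real (sqrt (real N)) ^ n = exp (of_nat n * of_real (ln (real N) / 2))"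
    by (metis sqrt_N_eq_exp exp_of_nat_mult)
  then show ?thesis unfolding exp_form_def by (simp add: algebra_simps)
qed

lemma exp_form_inverse_N_s_square: "1 / (of_nat N * s ^ 2) = exp_form (- ln (real N)) (- 2) 0 (Ln s)"
proof -
  have "exp (of_nat 2 * Ln s) = exp (Ln s) ^ 2" by (rule exp_of_nat_mult)
  then have e2: "exp (2 * Ln s) = s ^ 2" using nonzero by simp
  have "exp_form (- ln (real N)) (- 2) 0 (Ln s) = exp (- of_real (ln (real N))) * exp (- (2 * Ln s))"
    unfolding exp_form_def by (simp add: exp_add[symmetric])
  also have "\<dots> = 1 / of_nat N * (1 / s ^ 2)"
    by (simp only: exp_minus e2 exp_ln_N) (simp add: divide_inverse)
  finally show ?thesis by simp
qed

end

definition Phi_term1 :: "real \<Rightarrow> nat \<Rightarrow> real \<Rightarrow> nat \<Rightarrow> complex \<Rightarrow> complex \<Rightarrow> complex" where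
  "Phi_term1 k N a n z w = of_real (gbinom (k - 2) (real n)) * (\<i> * of_nat N * z) ^ n * w powr (of_real (a - real n))"

definition Phi_term2 :: "real \<Rightarrow> nat \<Rightarrow> real \<Rightarrow> nat \<Rightarrow> complex \<Rightarrow> complex \<Rightarrow> complex" where
  "Phi_term2 k N a n z w = \<i> powr (of_real k) / of_real (real N powr (1/4)) * of_real (gbinom (k - 2) (real n + 1/2))
      * (\<i> * z) ^ n * (- of_nat N * w) powr (of_real (2 * k - 9/2 - a - real n))"

lemma Phi_split: "Phi k N a z w = (\<Sum>n = 0..nat \<lfloor>k - 5/2\<rfloor>. Phi_term1 k N a n z w + Phi_term2 k N a n z w)"
  by (simp add: Phi_def Phi_term1_def Phi_term2_def)

text \<open>The automorphy factor \<open>i^m (sqrt N z)^m\<close> of part (i), times the factor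
  \<open>(-i sqrt N s)^k\<close> of \<open>f(-1/(Ns)) = (-i sqrt N s)^k f(s)\<close>, times the derivative
  \<open>1/(N s^2)\<close> of \<open>s \<mapsto> -1/(Ns)\<close>.\<close>

definition fricke_factor :: "real \<Rightarrow> nat \<Rightarrow> nat \<Rightarrow> complex \<Rightarrow> complex \<Rightarrow> complex" where
  "fricke_factor k N m z s = \<i> ^ m * (of_real (sqrt (real N)) * z) ^ m
     * (- \<i> * of_real (sqrt (real N)) * s) powr (of_real k) / (of_nat N * s ^ 2)"

lemma fricke_factor_Phi_term1:
  assumes N: "N > 0" and z: "z \<noteq> 0" and s: "Im s > 0" and m: "real m = k - 5/2" and n: "n \<le> m"
  shows "fricke_factor k N m z s * Phi_term1 k N a n (- 1 / (of_nat N * z)) (- 1 / (of_nat N * s))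
       = Phi_term2 k N a (m - n) z s"
proof -
  have rearrange: "\<i> ^ m * (sq * z) ^ m * P / (Nc * s ^ 2) * (A * (\<i> * Nc * (- 1 / (Nc * z))) ^ n * Q)
       = A * z ^ (m - n) * (\<i> ^ m * sq ^ m * P * (1 / (Nc * s ^ 2)) * (- \<i>) ^ n * Q)"
    if "Nc \<noteq> 0" for sq P Q A Nc :: complex
  proof -
    have e: "\<i> * Nc * (- 1 / (Nc * z)) = - \<i> / z" using z that by (simp add: field_simps)
    have "z ^ m = z ^ (m - n) * z ^ n" using n by (simp add: power_add[symmetric])
    then have zm: "(sq * z) ^ m = sq ^ m * z ^ (m - n) * z ^ n" by (simp add: power_mult_distrib)
    show ?thesis unfolding e zm power_divide using z that by (simp add: field_simps)
  qed
  have "fricke_factor k N m z s * Phi_term1 k N a n (- 1 / (of_nat N * z)) (- 1 / (of_nat N * s))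
     = of_real (gbinom (k - 2) (real n)) * z ^ (m - n) *
       (\<i> ^ m * of_real (sqrt (real N)) ^ m * (- \<i> * of_real (sqrt (real N)) * s) powr (of_real k)
        * (1 / (of_nat N * s ^ 2)) * (- \<i>) ^ n * (- 1 / (of_nat N * s)) powr (of_real (a - real n)))"
    unfolding fricke_factor_def Phi_term1_def by (rule rearrange) (use N in simp)
  also have "\<i> ^ m * of_real (sqrt (real N)) ^ m * (- \<i> * of_real (sqrt (real N)) * s) powr (of_real k)
        * (1 / (of_nat N * s ^ 2)) * (- \<i>) ^ n * (- 1 / (of_nat N * s)) powr (of_real (a - real n))
     = \<i> powr (of_real k) * (1 / of_real (real N powr (1/4))) * \<i> ^ (m - n)
        * (- of_nat N * s) powr (of_real (2 * k - 9/2 - a - real (m - n)))"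
    by (simp only: exp_form_i_power[OF s N] exp_form_sqrt_N_power[OF s N]
          exp_form_fricke_weight_powr[OF s N] exp_form_inverse_N_s_square[OF s N]
          exp_form_neg_i_power[OF s N] exp_form_fricke_s_powr[OF s N] exp_form_i_powr[OF s N]
          exp_form_inverse_N_powr[OF s N] exp_form_neg_N_s_powr[OF s N] exp_form_mult,
        rule trans[OF exp_form_cong exp_form_minus_2pi])
       (use n in \<open>simp_all add: m of_nat_diff field_simps\<close>)
  also have "real (m - n) + 1/2 = (k - 2) - real n" using n m by (simp add: of_nat_diff)
  then have "of_real (gbinom (k - 2) (real n)) * z ^ (m - n) * (\<i> powr (of_real k) * (1 / of_real (real N powr (1/4)))
        * \<i> ^ (m - n) * (- of_nat N * s) powr (of_real (2 * k - 9/2 - a - real (m - n))))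
      = Phi_term2 k N a (m - n) z s"
    unfolding Phi_term2_def by (simp add: gbinom_symmetric power_mult_distrib)
  finally show ?thesis .
qed

lemma fricke_factor_Phi_term2:
  assumes N: "N > 0" and z: "z \<noteq> 0" and s: "Im s > 0" and m: "real m = k - 5/2" and n: "n \<le> m"
  shows "fricke_factor k N m z s * Phi_term2 k N a n (- 1 / (of_nat N * z)) (- 1 / (of_nat N * s))
       = Phi_term1 k N a (m - n) z s"
proof -
  have rearrange: "\<i> ^ m * (sq * z) ^ m * P / (Nc * s ^ 2) * (R / S * B * (\<i> * (- 1 / (Nc * z))) ^ n * Q)
       = B * z ^ (m - n) * (\<i> ^ m * sq ^ m * P * (1 / (Nc * s ^ 2)) * R * (1 / S) * (- \<i>) ^ n
           * (1 / Nc ^ n) * Q)"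
    if "Nc \<noteq> 0" for sq P Q R S B Nc :: complex
  proof -
    have e: "\<i> * (- 1 / (Nc * z)) = - \<i> / (Nc * z)" using z that by (simp add: field_simps)
    have "z ^ m = z ^ (m - n) * z ^ n" using n by (simp add: power_add[symmetric])
    then have zm: "(sq * z) ^ m = sq ^ m * z ^ (m - n) * z ^ n" by (simp add: power_mult_distrib)
    have e2: "(- \<i> / (Nc * z)) ^ n = (- \<i>) ^ n / (Nc ^ n * z ^ n)"
      by (metis power_divide power_mult_distrib)
    show ?thesis unfolding e zm e2 using z that by (simp add: field_simps)
  qed
  have "fricke_factor k N m z s * Phi_term2 k N a n (- 1 / (of_nat N * z)) (- 1 / (of_nat N * s))
     = of_real (gbinom (k - 2) (real n + 1/2)) * z ^ (m - n) *
       (\<i> ^ m * of_real (sqrt (real N)) ^ m * (- \<i> * of_real (sqrt (real N)) * s) powr (of_real k)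
        * (1 / (of_nat N * s ^ 2)) * \<i> powr (of_real k) * (1 / of_real (real N powr (1/4)))
        * (- \<i>) ^ n * (1 / of_nat N ^ n)
        * (- of_nat N * (- 1 / (of_nat N * s))) powr (of_real (2 * k - 9/2 - a - real n)))"
    unfolding fricke_factor_def Phi_term2_def by (rule rearrange) (use N in simp)
  also have "\<i> ^ m * of_real (sqrt (real N)) ^ m * (- \<i> * of_real (sqrt (real N)) * s) powr (of_real k)
        * (1 / (of_nat N * s ^ 2)) * \<i> powr (of_real k) * (1 / of_real (real N powr (1/4)))
        * (- \<i>) ^ n * (1 / of_nat N ^ n)
        * (- of_nat N * (- 1 / (of_nat N * s))) powr (of_real (2 * k - 9/2 - a - real n))
     = \<i> ^ (m - n) * of_nat N ^ (m - n) * s powr (of_real (a - real (m - n)))"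
    by (simp only: exp_form_i_power[OF s N] exp_form_sqrt_N_power[OF s N]
          exp_form_fricke_weight_powr[OF s N] exp_form_inverse_N_s_square[OF s N]
          exp_form_neg_i_power[OF s N] exp_form_neg_N_fricke_s_powr[OF s N] exp_form_i_powr[OF s N]
          exp_form_inverse_N_powr[OF s N] exp_form_N_power[OF s N] exp_form_s_powr[OF s N]
          exp_form_inverse exp_form_mult,
        rule exp_form_cong)
       (use n in \<open>simp_all add: m of_nat_diff field_simps\<close>)
  also have "real n + 1/2 = (k - 2) - real (m - n)" using n m by (simp add: of_nat_diff)
  then have "of_real (gbinom (k - 2) (real n + 1/2)) * z ^ (m - n)
        * (\<i> ^ (m - n) * of_nat N ^ (m - n) * s powr (of_real (a - real (m - n))))
      = Phi_term1 k N a (m - n) z s"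
    unfolding Phi_term1_def by (simp add: gbinom_symmetric power_mult_distrib)
  finally show ?thesis .
qed

section \<open>Cusp forms for \<open>\<Gamma>\<^sub>0\<^sup>*(N)\<close>\<close>

locale fricke_cusp_form =
  fixes k :: real and N :: nat and f :: "complex \<Rightarrow> complex"
  assumes k_half: "k - 1/2 \<in> \<int>" and k_gt: "k > 5/2" and N_pos: "N > 0"
    and f_cusp: "cusp_form_star k N f"
begin

lemma f_holomorphic: "f holomorphic_on {w. Im w > 0}"
  using f_cusp unfolding cusp_form_star_def upper_half_plane_def by blast

lemma f_continuous: "continuous_on {w. Im w > 0} f"
  by (rule holomorphic_on_imp_continuous_on[OF f_holomorphic])

lemma f_periodic: assumes "Im w > 0" shows "f (w + of_int j) = f w"
proof -
  have g: "(1, j, 0, 1) \<in> Gamma0 N" unfolding Gamma0_def by simp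
  have "w \<in> upper_half_plane" using assms by (simp add: upper_half_plane_def)
  then have "slash_half k (1, j, 0, 1) f w = f w" using f_cusp g unfolding cusp_form_star_def by blast
  moreover have "kronecker 0 1 = 1" by (simp add: kronecker_def jacobi_def)
  moreover have "eps 1 = 1" by (simp add: eps_def)
  ultimately show ?thesis by (simp add: slash_half_def add.commute)
qed

lemma f_fricke: assumes "Im w > 0"
  shows "f (- 1 / (of_nat N * w)) = (- \<i> * of_real (sqrt (real N)) * w) powr (of_real k) * f w"
proof -
  have "w \<in> upper_half_plane" using assms by (simp add: upper_half_plane_def)
  then have e: "(- \<i> * of_real (sqrt (real N)) * w) powr (- of_real k) * f (- 1 / (of_nat N * w)) = f w"
    using f_cusp unfolding cusp_form_star_def slash_half_W_def by blast
  have nz: "- \<i> * of_real (sqrt (real N)) * w \<noteq> 0" using assms N_pos by auto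
  have "f w * (- \<i> * of_real (sqrt (real N)) * w) powr (of_real k)
      = (- \<i> * of_real (sqrt (real N)) * w) powr (of_real k)
        * (- \<i> * of_real (sqrt (real N)) * w) powr (- of_real k) * f (- 1 / (of_nat N * w))"
    by (subst e[symmetric]) (simp add: algebra_simps)
  also have "\<dots> = f (- 1 / (of_nat N * w))"
    using nz by (simp add: powr_minus)
  finally show ?thesis by (simp add: mult.commute)
qed

lemma f_vanishes_at_infinity: assumes "e > 0" shows "\<exists>Y. \<forall>w. Im w > Y \<longrightarrow> norm (f w) < e"
proof -
  have "(1, 0, 0, 1) \<in> SL2Z" by (simp add: SL2Z_def)
  then have "\<exists>Y. \<forall>z. Im z > Y \<longrightarrow> norm ((of_int 0 * z + of_int 1) powr (- of_real k) *
              f ((of_int 1 * z + of_int 0) / (of_int 0 * z + of_int 1))) < e"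
    using f_cusp assms unfolding cusp_form_star_def by blast
  then show ?thesis by simp
qed

lemma f_eq_if_exp_eq:
  assumes "Im u > 0" "Im w > 0" "exp (2 * pi * \<i> * u) = exp (2 * pi * \<i> * w)"
  shows "f u = f w"
proof -
  obtain n :: int where "2 * pi * \<i> * u = 2 * pi * \<i> * w + of_real (2 * pi * of_int n) * \<i>"
    using assms(3) unfolding exp_eq by (auto simp: algebra_simps)
  then have "(2 * pi * \<i>) * u = (2 * pi * \<i>) * (w + of_int n)" by (simp add: algebra_simps)
  then have "u = w + of_int n" by (subst (asm) mult_cancel_left) simp
  then show ?thesis using f_periodic assms(2) by simp
qed

subsection \<open>Exponential decay at infinity\<close>

definition f_of_q :: "complex \<Rightarrow> complex" where
  "f_of_q q = f (Ln q / (2 * pi * \<i>))"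

lemma f_of_q_holomorphic: "f_of_q holomorphic_on ball 0 1 - {0}"
proof -
  have Im_pos: "Im (Ln q / (2 * pi * \<i>)) > 0" if "norm q < 1" "q \<noteq> 0" for q
    using that Im_Ln_div_2pi_i[of q] by (simp add: divide_neg_pos ln_less_zero)
  have "(\<lambda>q. Ln q / (2 * pi * \<i>)) ` (ball 0 1 - \<real>\<^sub>\<le>\<^sub>0) \<subseteq> {w. Im w > 0}"
    using Im_pos nonpos_Reals_zero_I by fastforce
  then have "(f \<circ> (\<lambda>q. Ln q / (2 * pi * \<i>))) holomorphic_on ball 0 1 - \<real>\<^sub>\<le>\<^sub>0"
    by (intro holomorphic_on_compose_gen[OF _ f_holomorphic] holomorphic_intros) auto
  then have "f_of_q holomorphic_on ball 0 1 - \<real>\<^sub>\<le>\<^sub>0"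
    by (simp add: f_of_q_def[abs_def] o_def)
  moreover have "f_of_q holomorphic_on ball 0 1 - \<real>\<^sub>\<ge>\<^sub>0"
  proof -
    \<comment> \<open>away from the positive axis use the branch \<open>Ln (-q) + i pi\<close> of the logarithm\<close>
    have "(\<lambda>q. Ln (- q) / (2 * pi * \<i>) + 1/2) ` (ball 0 1 - \<real>\<^sub>\<ge>\<^sub>0) \<subseteq> {w. Im w > 0}"
      using Im_pos[of "- q" for q] nonneg_Reals_zero_I by fastforce
    then have "(f \<circ> (\<lambda>q. Ln (- q) / (2 * pi * \<i>) + 1/2)) holomorphic_on ball 0 1 - \<real>\<^sub>\<ge>\<^sub>0"
      by (intro holomorphic_on_compose_gen[OF _ f_holomorphic] holomorphic_intros)
         (auto simp: complex_nonpos_Reals_iff complex_nonneg_Reals_iff)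
    then have "(\<lambda>q. f (Ln (- q) / (2 * pi * \<i>) + 1/2)) holomorphic_on ball 0 1 - \<real>\<^sub>\<ge>\<^sub>0"
      by (simp add: o_def)
    moreover have "f (Ln (- q) / (2 * pi * \<i>) + 1/2) = f_of_q q" if q: "q \<in> ball 0 1 - \<real>\<^sub>\<ge>\<^sub>0" for q
      unfolding f_of_q_def
    proof (rule f_eq_if_exp_eq)
      have q0: "q \<noteq> 0" using q by auto
      show "Im (Ln (- q) / (2 * pi * \<i>) + 1/2) > 0" "Im (Ln q / (2 * pi * \<i>)) > 0"
        using q q0 Im_pos[of q] Im_pos[of "- q"] by auto
      have "exp (2 * pi * \<i> * (Ln (- q) / (2 * pi * \<i>) + 1/2)) = exp (Ln (- q)) * exp (pi * \<i>)"
        by (simp add: distrib_left exp_add)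
      then show "exp (2 * pi * \<i> * (Ln (- q) / (2 * pi * \<i>) + 1/2)) = exp (2 * pi * \<i> * (Ln q / (2 * pi * \<i>)))"
        using q0 by simp
    qed
    ultimately show ?thesis by (rule holomorphic_transform)
  qed
  moreover have "ball (0::complex) 1 - {0} = (ball 0 1 - \<real>\<^sub>\<le>\<^sub>0) \<union> (ball 0 1 - \<real>\<^sub>\<ge>\<^sub>0)"
    by (auto simp: complex_nonpos_Reals_iff complex_nonneg_Reals_iff complex_eq_iff)
  ultimately show ?thesis
    by (metis holomorphic_on_Un open_Diff open_ball closed_nonpos_Reals_complex closed_nonneg_Reals_complex)
qed

lemma f_of_q_tendsto_0: "(f_of_q \<longlongrightarrow> 0) (at 0)"
proof (rule tendstoI)
  fix e :: real assume "e > 0"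
  then obtain Ye where Ye: "\<forall>w. Im w > Ye \<longrightarrow> norm (f w) < e" using f_vanishes_at_infinity by blast
  define d where "d = exp (- 2 * pi * max Ye 1)"
  have d0: "d > 0" by (simp add: d_def)
  have "dist (f_of_q q) 0 < e" if q: "q \<noteq> 0" "dist q 0 < d" for q
  proof -
    have "ln (norm q) < ln d" using q d0 by simp
    then have "ln (norm q) < - 2 * pi * max Ye 1" by (simp add: d_def)
    then have "max Ye 1 * (2 * pi) < - ln (norm q)" by (simp add: algebra_simps)
    then have "max Ye 1 < - ln (norm q) / (2 * pi)" by (rule pos_less_divide_eq[THEN iffD2, rotated]) simp
    then have "Im (Ln q / (2 * pi * \<i>)) > Ye" using Im_Ln_div_2pi_i[OF q(1)] by linarith
    then show ?thesis using Ye by (simp add: f_of_q_def)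
  qed
  then show "\<forall>\<^sub>F q in at 0. dist (f_of_q q) 0 < e" unfolding eventually_at using d0 by blast
qed

lemma f_exp_decay: "\<exists>C Y. C > 0 \<and> Y > 0 \<and> (\<forall>w. Im w > Y \<longrightarrow> norm (f w) \<le> C * exp (- 2 * pi * Im w))"
proof -
  obtain Y0 where Y0: "\<forall>w. Im w > Y0 \<longrightarrow> norm (f w) < 1" using f_vanishes_at_infinity[of 1] by auto
  define Y where "Y = max Y0 1"
  define r where "r = exp (- 2 * pi * Y)"
  have r0: "r > 0" and r1: "r < 1" unfolding r_def Y_def by auto
  define G where "G = (\<lambda>q. if q = 0 then 0 else f_of_q q)"
  have "G holomorphic_on ball 0 1"
    unfolding G_def by (rule removable_singularity) (use f_of_q_holomorphic f_of_q_tendsto_0 in auto)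
  then have G_hol: "G holomorphic_on ball 0 r"
    by (rule holomorphic_on_subset) (use r1 in auto)
  have G_bound: "norm (G q) < 1" if "norm q < r" for q
  proof (cases "q = 0")
    case False
    then have "ln (norm q) < ln r" using that r0 by simp
    then have "Y * (2 * pi) < - ln (norm q)" by (simp add: r_def algebra_simps)
    then have "Y < - ln (norm q) / (2 * pi)" by (rule pos_less_divide_eq[THEN iffD2, rotated]) simp
    then have "Im (Ln q / (2 * pi * \<i>)) > Y0" using Im_Ln_div_2pi_i[OF False] by (simp add: Y_def)
    then show ?thesis using Y0 False by (simp add: G_def f_of_q_def)
  qed (simp add: G_def)
  have "norm (f w) \<le> (1 / r) * exp (- 2 * pi * Im w)" if w: "Im w > Y" for w
  proof -
    define q where "q = exp (2 * pi * \<i> * w)"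
    have q0: "q \<noteq> 0" by (simp add: q_def)
    have nq: "norm q = exp (- 2 * pi * Im w)" by (simp add: q_def norm_exp_eq_Re)
    then have "norm q < r" unfolding r_def using w by simp
    have "f_of_q q = f w" unfolding f_of_q_def
      by (rule f_eq_if_exp_eq) (use Im_Ln_div_2pi_i[OF q0] nq w in \<open>auto simp: q_def Y_def\<close>)
    then have "G q = f w" using q0 by (simp add: G_def)
    moreover have "norm (G q) \<le> norm q / r"
      by (rule Schwarz_Lemma_ball[OF r0 G_hol _ G_bound \<open>norm q < r\<close>]) (simp add: G_def)
    ultimately show ?thesis using nq by simp
  qed
  then show ?thesis using r0 by (intro exI[of _ "1/r"] exI[of _ Y]) (auto simp: Y_def)
qed

subsection \<open>Mellin transforms along the imaginary axis\<close>

lemma f_axis_continuous: "continuous_on {0<..} (\<lambda>t. f (\<i> * of_real t))"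
  by (rule continuous_on_compose2[OF f_continuous]) (auto intro!: continuous_intros)

lemma f_axis_fricke: assumes t: "t > 0"
  shows "f (\<i> * of_real t) = of_real ((sqrt (real N) / real N / t) powr k) * f (\<i> * of_real (1 / (real N * t)))"
proof -
  define w where "w = \<i> * of_real (1 / (real N * t))"
  have Iw: "Im w > 0" using t N_pos by (simp add: w_def)
  have e1: "- 1 / (of_nat N * w) = \<i> * of_real t" using t N_pos by (simp add: w_def field_simps)
  have e2: "- \<i> * of_real (sqrt (real N)) * w = of_real (sqrt (real N) / real N / t)"
    using t N_pos by (simp add: w_def field_simps)
  have "f (\<i> * of_real t) = (of_real (sqrt (real N) / real N / t)) powr (of_real k) * f w"
    using f_fricke[OF Iw] unfolding e1 e2 .
  also have "(of_real (sqrt (real N) / real N / t) :: complex) powr (of_real k)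
      = of_real ((sqrt (real N) / real N / t) powr k)"
    using t N_pos by (subst powr_of_real) auto
  finally show ?thesis by (simp add: w_def)
qed

lemma f_axis_powr_exp_bound: "eventually (\<lambda>t. norm (f (\<i> * of_real t) * of_real (t powr c)) \<le> exp (- pi * t)) at_top"
proof -
  obtain C Y where C: "C > 0" and Y: "Y > 0" and dec: "\<And>w. Im w > Y \<Longrightarrow> norm (f w) \<le> C * exp (- 2 * pi * Im w)"
    using f_exp_decay by blast
  have "(\<lambda>t::real. t powr c * exp (- 2 * pi * t)) \<in> o(\<lambda>t. exp (- pi * t))" by real_asymp
  then have "eventually (\<lambda>t. norm (t powr c * exp (- 2 * pi * t)) \<le> (1 / C) * norm (exp (- pi * t))) at_top"
    using C by (intro landau_o.smallD) auto
  moreover have "eventually (\<lambda>t::real. t > Y) at_top" by (rule eventually_gt_at_top)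
  ultimately show ?thesis
  proof eventually_elim
    case (elim t)
    have "norm (f (\<i> * of_real t) * of_real (t powr c)) = norm (f (\<i> * of_real t)) * t powr c"
      using elim Y by (simp add: norm_mult)
    also have "\<dots> \<le> C * exp (- 2 * pi * t) * t powr c"
      using dec[of "\<i> * of_real t"] elim by (intro mult_right_mono) auto
    also have "\<dots> = C * (t powr c * exp (- 2 * pi * t))" by simp
    also have "\<dots> \<le> C * ((1 / C) * exp (- pi * t))"
      using elim(1) C by (intro mult_left_mono) auto
    finally show ?case using C by simp
  qed
qed

text \<open>Near \<open>t = 0\<close> the Fricke relation moves \<open>it\<close> to \<open>i/(Nt)\<close>, where \<open>f\<close> decays exponentially.\<close>

lemma f_axis_powr_bounded_at_0: "eventually (\<lambda>t. norm (f (\<i> * of_real t) * of_real (t powr c)) \<le> 1) (at_right 0)"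
proof -
  obtain C Y where C: "C > 0" and Y: "Y > 0" and dec: "\<And>w. Im w > Y \<Longrightarrow> norm (f w) \<le> C * exp (- 2 * pi * Im w)"
    using f_exp_decay by blast
  define \<alpha> where "\<alpha> = sqrt (real N) / real N"
  define \<beta> where "\<beta> = 2 * pi / real N"
  have ab: "\<alpha> > 0" "\<beta> > 0" using N_pos by (auto simp: \<alpha>_def \<beta>_def)
  have "((\<lambda>t::real. (\<alpha> / t) powr k * exp (- \<beta> / t) * t powr c) \<longlongrightarrow> 0) (at_right 0)"
    using ab by real_asymp
  then have "((\<lambda>t. C * ((\<alpha> / t) powr k * exp (- \<beta> / t) * t powr c)) \<longlongrightarrow> C * 0) (at_right 0)"
    by (intro tendsto_mult tendsto_const)
  then have "eventually (\<lambda>t. C * ((\<alpha> / t) powr k * exp (- \<beta> / t) * t powr c) < 1) (at_right 0)"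
    by (intro order_tendstoD) auto
  moreover have "eventually (\<lambda>t::real. t > 0 \<and> t < 1 / (real N * Y)) (at_right 0)"
    unfolding eventually_at_right_field using N_pos Y by (intro exI[of _ "1 / (real N * Y)"]) auto
  ultimately show ?thesis
  proof eventually_elim
    case (elim t)
    have t0: "t > 0" and tY: "t < 1 / (real N * Y)" using elim by auto
    have "Y < 1 / (real N * t)" using tY t0 N_pos Y by (simp add: field_simps)
    then have fb: "norm (f (\<i> * of_real (1 / (real N * t)))) \<le> C * exp (- \<beta> / t)"
      using dec[of "\<i> * of_real (1 / (real N * t))"] by (simp add: \<beta>_def field_simps)
    have "norm (f (\<i> * of_real t) * of_real (t powr c))
        = (\<alpha> / t) powr k * norm (f (\<i> * of_real (1 / (real N * t)))) * t powr c"
      unfolding f_axis_fricke[OF t0] \<alpha>_def using t0 by (simp add: norm_mult)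
    also have "\<dots> \<le> (\<alpha> / t) powr k * (C * exp (- \<beta> / t)) * t powr c"
      by (intro mult_right_mono mult_left_mono fb) auto
    also have "\<dots> = C * ((\<alpha> / t) powr k * exp (- \<beta> / t) * t powr c)" by simp
    finally show ?case using elim(1) by simp
  qed
qed

lemma set_integrable_f_axis_powr: "set_integrable lborel {0<..} (\<lambda>t. f (\<i> * of_real t) * of_real (t powr c))"
proof -
  define h where "h t = f (\<i> * of_real t) * of_real (t powr c)" for t
  have cont: "continuous_on {0<..} h"
    unfolding h_def by (intro continuous_intros f_axis_continuous) auto
  obtain T where T: "\<And>t. t \<ge> T \<Longrightarrow> norm (h t) \<le> 1 * exp (- pi * t)"
    using f_axis_powr_exp_bound[of c] unfolding h_def eventually_at_top_linorder by auto
  have "set_integrable lborel {1..} h"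
    by (rule set_integrable_atLeast_exp_bound[OF _ _ T]) (auto intro: continuous_on_subset[OF cont])
  moreover have "eventually (\<lambda>t. norm (h t) \<le> 1) (at_right 0)"
    using f_axis_powr_bounded_at_0 by (simp add: h_def)
  then have "set_integrable lborel {0<..1} h"
    by (rule set_integrable_greaterThanAtMost_bounded_at_0[rotated 2])
       (auto intro: continuous_on_subset[OF cont])
  moreover have "{0<..} = {0<..1} \<union> {1::real..}" by auto
  ultimately show ?thesis using set_integrable_Un unfolding h_def by fastforce
qed

end

lemma set_integral_axis_powr_eq_Lambda:
  "(LBINT t:{0<..}. f (\<i> * of_real t) * of_real (t powr c)) = Lambda f (of_real (c + 1))"
  unfolding Lambda_def
proof (rule set_lebesgue_integral_cong, simp, intro allI impI)
  fix t :: real assume "t \<in> {0<..}"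
  then have "(complex_of_real t) powr (complex_of_real (c + 1) - 1) = of_real (t powr c)"
    by (subst powr_of_real[symmetric]) auto
  then show "f (\<i> * of_real t) * of_real (t powr c)
      = f (\<i> * of_real t) * (complex_of_real t) powr (complex_of_real (c + 1) - 1)"
    by simp
qed

section \<open>The period function \<open>P\<^sub>a\<close>\<close>

locale fricke_period = fricke_cusp_form +
  fixes a :: real
  assumes a_lo: "0 \<le> a" and a_hi: "a \<le> 2 * k - 9/2"
begin

definition m :: nat where "m = nat \<lfloor>k - 5/2\<rfloor>"

lemma real_m: "real m = k - 5/2"
proof -
  obtain j :: int where j: "k - 1/2 = of_int j" using k_half by (auto elim: Ints_cases)
  then have e: "k - 5/2 = of_int (j - 2)" by simp
  then have "j - 2 \<ge> 0" using k_gt by linarith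
  then show ?thesis unfolding m_def e by simp
qed

lemma Phi_holomorphic: "(\<lambda>w. Phi k N a z w) holomorphic_on {w. Im w > 0}"
  unfolding Phi_def
  by (intro holomorphic_intros) (use N_pos in \<open>auto simp: complex_nonpos_Reals_iff\<close>)

lemma norm_Phi_term1_le:
  assumes w: "norm w \<ge> 1"
  shows "norm (Phi_term1 k N a n z w)
    \<le> \<bar>gbinom (k - 2) (real n)\<bar> * norm (\<i> * of_nat N * z) ^ n * norm w powr (2 * k)"
proof -
  have "norm w powr (a - real n) \<le> norm w powr (2 * k)"
    using w a_hi k_gt by (intro powr_mono) auto
  moreover have "norm (Phi_term1 k N a n z w)
      = \<bar>gbinom (k - 2) (real n)\<bar> * norm (\<i> * of_nat N * z) ^ n * norm w powr (a - real n)"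
    unfolding Phi_term1_def by (simp only: norm_mult norm_power norm_powr_of_real norm_of_real)
  ultimately show ?thesis by (simp add: mult_left_mono)
qed

lemma norm_Phi_term2_le:
  assumes w: "norm w \<ge> 1"
  shows "norm (Phi_term2 k N a n z w)
    \<le> norm (\<i> powr (of_real k) / of_real (real N powr (1/4))) * \<bar>gbinom (k - 2) (real n + 1/2)\<bar>
        * norm (\<i> * z) ^ n * real N powr (2 * k) * norm w powr (2 * k)"
proof -
  have nw: "norm (- of_nat N * w) = real N * norm w" by (simp add: norm_mult)
  have "(real N * norm w) powr (2 * k - 9/2 - a - real n) \<le> (real N * norm w) powr (2 * k)"
    using w N_pos a_lo by (intro powr_mono) (auto intro: order_trans[OF _ mult_mono[of 1 _ 1]])
  also have "\<dots> = real N powr (2 * k) * norm w powr (2 * k)" by (simp add: powr_mult)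
  finally have "norm ((- of_nat N * w) powr (of_real (2 * k - 9/2 - a - real n)))
      \<le> real N powr (2 * k) * norm w powr (2 * k)"
    by (simp only: norm_powr_of_real nw)
  moreover have "norm (Phi_term2 k N a n z w)
    = (norm (\<i> powr (of_real k) / of_real (real N powr (1/4))) * \<bar>gbinom (k - 2) (real n + 1/2)\<bar>
       * norm (\<i> * z) ^ n) * norm ((- of_nat N * w) powr (of_real (2 * k - 9/2 - a - real n)))"
    unfolding Phi_term2_def by (simp only: norm_mult norm_power norm_of_real)
  ultimately show ?thesis
    by (metis (no_types, lifting) mult.assoc mult_left_mono norm_ge_zero abs_ge_zero
        mult_nonneg_nonneg zero_le_power)
qed

lemma Phi_bound: "\<exists>B. \<forall>w. Im w \<ge> 1 \<longrightarrow> norm (Phi k N a z w) \<le> B * norm w powr (2 * k)"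
proof -
  define K where "K n = \<bar>gbinom (k - 2) (real n)\<bar> * norm (\<i> * of_nat N * z) ^ n
      + norm (\<i> powr (of_real k) / of_real (real N powr (1/4))) * \<bar>gbinom (k - 2) (real n + 1/2)\<bar>
        * norm (\<i> * z) ^ n * real N powr (2 * k)" for n
  have "norm (Phi k N a z w) \<le> (\<Sum>n = 0..nat \<lfloor>k - 5/2\<rfloor>. K n) * norm w powr (2 * k)"
    if "Im w \<ge> 1" for w
  proof -
    have w: "norm w \<ge> 1" using that abs_Im_le_cmod[of w] by linarith
    have "norm (Phi k N a z w) \<le> (\<Sum>n = 0..nat \<lfloor>k - 5/2\<rfloor>. K n * norm w powr (2 * k))"
      unfolding Phi_split K_def
      by (rule order_trans[OF norm_sum sum_mono], rule order_trans[OF norm_triangle_ineq])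
         (use norm_Phi_term1_le[OF w] norm_Phi_term2_le[OF w] in \<open>simp add: distrib_right add_mono\<close>)
    then show ?thesis by (simp add: sum_distrib_right)
  qed
  then show ?thesis by blast
qed

subsection \<open>Expansion in values of \<open>\<Lambda>\<^sub>f\<close>\<close>

definition axis_coeff1 :: "nat \<Rightarrow> complex \<Rightarrow> complex" where
  "axis_coeff1 n z = of_real (gbinom (k - 2) (real n)) * (\<i> * of_nat N * z) ^ n * \<i> powr (of_real (a - real n))"

definition axis_coeff2 :: "nat \<Rightarrow> complex \<Rightarrow> complex" where
  "axis_coeff2 n z = \<i> powr (of_real k) / of_real (real N powr (1/4)) * of_real (gbinom (k - 2) (real n + 1/2))
      * (\<i> * z) ^ n * of_real (real N powr (2 * k - 9/2 - a - real n))
      * (- \<i>) powr (of_real (2 * k - 9/2 - a - real n))"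

lemma Phi_imaginary_axis: assumes t: "t > 0"
  shows "Phi k N a z (\<i> * of_real t) = (\<Sum>n = 0..nat \<lfloor>k - 5/2\<rfloor>.
      axis_coeff1 n z * of_real (t powr (a - real n))
      + axis_coeff2 n z * of_real (t powr (2 * k - 9/2 - a - real n)))"
proof -
  have e1: "(\<i> * of_real t) powr (of_real c) = of_real (t powr c) * \<i> powr (of_real c)" for c
    using powr_times_real_left[of "of_real t" \<i>] t by (simp add: powr_of_real mult.commute)
  have e2: "(- of_nat N * (\<i> * of_real t)) powr (of_real c)
      = of_real (real N powr c) * of_real (t powr c) * (- \<i>) powr (of_real c)" for c
  proof -
    have eq: "- of_nat N * (\<i> * of_real t) = complex_of_real (real N * t) * (- \<i>)" by simp
    have "(- of_nat N * (\<i> * of_real t)) powr (of_real c)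
        = complex_of_real (real N * t) powr (of_real c) * (- \<i>) powr (of_real c)"
      unfolding eq by (rule powr_times_real_left) (use t N_pos in auto)
    also have "complex_of_real (real N * t) powr (of_real c) = of_real ((real N * t) powr c)"
      by (rule powr_of_real) (use t N_pos in auto)
    finally have "(- of_nat N * (\<i> * of_real t)) powr (of_real c) = of_real ((real N * t) powr c) * (- \<i>) powr (of_real c)" .
    then show ?thesis using t N_pos by (simp add: powr_mult)
  qed
  show ?thesis unfolding Phi_def axis_coeff1_def axis_coeff2_def e1 e2
    by (intro sum.cong refl) (simp add: algebra_simps)
qed

lemma Pa_integrand_expansion: assumes "t > 0"
  shows "f (\<i> * of_real t) * Phi k N a z (\<i> * of_real t) * \<i> = (\<Sum>n = 0..nat \<lfloor>k - 5/2\<rfloor>.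
     (axis_coeff1 n z * \<i>) * (f (\<i> * of_real t) * of_real (t powr (a - real n))) +
     (axis_coeff2 n z * \<i>) * (f (\<i> * of_real t) * of_real (t powr (2 * k - 9/2 - a - real n))))"
  using assms by (simp add: Phi_imaginary_axis sum_distrib_left sum_distrib_right algebra_simps)

lemma set_integrable_Pa_terms:
  "set_integrable lborel {0<..} (\<lambda>t. (axis_coeff1 n z * \<i>) * (f (\<i> * of_real t) * of_real (t powr (a - real n))))"
  "set_integrable lborel {0<..} (\<lambda>t. (axis_coeff2 n z * \<i>)
     * (f (\<i> * of_real t) * of_real (t powr (2 * k - 9/2 - a - real n))))"
  using set_integrable_f_axis_powr by (auto intro: set_integrable_mult_right)

lemma set_integrable_Pa_integrand:
  "set_integrable lborel {0<..} (\<lambda>t. f (\<i> * of_real t) * Phi k N a z (\<i> * of_real t) * \<i>)"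
proof -
  have "set_integrable lborel {0<..} (\<lambda>t. \<Sum>n = 0..nat \<lfloor>k - 5/2\<rfloor>.
     (axis_coeff1 n z * \<i>) * (f (\<i> * of_real t) * of_real (t powr (a - real n))) +
     (axis_coeff2 n z * \<i>) * (f (\<i> * of_real t) * of_real (t powr (2 * k - 9/2 - a - real n))))"
    by (intro set_integrable_sum set_integral_add set_integrable_Pa_terms)
  then show ?thesis
    by (rule set_integrable_cong[THEN iffD1, rotated -1]) (auto simp: Pa_integrand_expansion)
qed

lemma Pa_eq_Lambda_sum: "Pa k N a f z = (\<Sum>n = 0..nat \<lfloor>k - 5/2\<rfloor>.
     (axis_coeff1 n z * \<i>) * Lambda f (of_real (a + 1 - real n)) +
     (axis_coeff2 n z * \<i>) * Lambda f (of_real (2 * k - 7/2 - a - real n)))"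
proof -
  have "Pa k N a f z = (LBINT t:{0<..}. \<Sum>n = 0..nat \<lfloor>k - 5/2\<rfloor>.
     (axis_coeff1 n z * \<i>) * (f (\<i> * of_real t) * of_real (t powr (a - real n))) +
     (axis_coeff2 n z * \<i>) * (f (\<i> * of_real t) * of_real (t powr (2 * k - 9/2 - a - real n))))"
    unfolding Pa_def by (rule set_lebesgue_integral_cong) (auto simp: Pa_integrand_expansion)
  also have "\<dots> = (\<Sum>n = 0..nat \<lfloor>k - 5/2\<rfloor>. LBINT t:{0<..}.
     (axis_coeff1 n z * \<i>) * (f (\<i> * of_real t) * of_real (t powr (a - real n))) +
     (axis_coeff2 n z * \<i>) * (f (\<i> * of_real t) * of_real (t powr (2 * k - 9/2 - a - real n))))"
    by (intro set_integral_sum set_integral_add set_integrable_Pa_terms)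
  also have "\<dots> = (\<Sum>n = 0..nat \<lfloor>k - 5/2\<rfloor>.
     (axis_coeff1 n z * \<i>) * Lambda f (of_real (a - real n + 1)) +
     (axis_coeff2 n z * \<i>) * Lambda f (of_real (2 * k - 9/2 - a - real n + 1)))"
    by (intro sum.cong refl) (simp add: set_integral_add set_integrable_Pa_terms set_integral_axis_powr_eq_Lambda)
  also have "\<dots> = (\<Sum>n = 0..nat \<lfloor>k - 5/2\<rfloor>.
     (axis_coeff1 n z * \<i>) * Lambda f (of_real (a + 1 - real n)) +
     (axis_coeff2 n z * \<i>) * Lambda f (of_real (2 * k - 7/2 - a - real n)))"
    by (intro sum.cong refl) (simp add: algebra_simps)
  finally show ?thesis .
qed

lemma axis_coeff1_times_i:
  "axis_coeff1 n z * \<i> = \<i> powr (of_real (a + 1)) * (of_real (gbinom (k - 2) (real n)) * of_nat N ^ n) * z ^ n"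
proof -
  have ii: "Im \<i> > 0" by simp
  have phase: "\<i> ^ n * \<i> powr (of_real (a - real n)) * \<i> ^ 1 = \<i> powr (of_real (a + 1))"
    by (simp only: exp_form_i_power[OF ii N_pos] exp_form_i_powr[OF ii N_pos] exp_form_mult,
        rule exp_form_cong) (simp_all add: field_simps)
  have "axis_coeff1 n z * \<i> = of_real (gbinom (k - 2) (real n)) * of_nat N ^ n * z ^ n
      * (\<i> ^ n * \<i> powr (of_real (a - real n)) * \<i>)"
    unfolding axis_coeff1_def by (simp add: power_mult_distrib algebra_simps)
  then show ?thesis using phase by (simp add: algebra_simps)
qed

lemma axis_coeff2_times_i:
  "axis_coeff2 n z * \<i> = \<i> powr (of_real (a + 1)) * (of_real (gbinom (k - 2) (real n + 1/2))
     * of_real (real N powr (2 * k - a - real n - 19/4)) * \<i> powr (of_real (2 * real n - k + 1/2))) * z ^ n"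
proof -
  have ii: "Im \<i> > 0" by simp
  have phase: "\<i> powr (of_real k) * (1 / of_real (real N powr (1/4))) * \<i> ^ n
      * of_real (real N powr (2 * k - 9/2 - a - real n)) * (- \<i>) powr (of_real (2 * k - 9/2 - a - real n)) * \<i> ^ 1
     = \<i> powr (of_real (a + 1)) * of_real (real N powr (2 * k - a - real n - 19/4))
      * \<i> powr (of_real (2 * real n - k + 1/2))"
    by (simp only: exp_form_i_power[OF ii N_pos] exp_form_i_powr[OF ii N_pos] exp_form_N_powr[OF ii N_pos]
          exp_form_inverse_N_powr[OF ii N_pos] exp_form_neg_i_powr[of _ "Ln \<i>"] exp_form_inverse exp_form_mult,
        rule sym, rule trans[OF exp_form_cong exp_form_minus_2pi])
       (simp_all add: field_simps)
  have "axis_coeff2 n z * \<i> = of_real (gbinom (k - 2) (real n + 1/2)) * z ^ n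
      * (\<i> powr (of_real k) * (1 / of_real (real N powr (1/4))) * \<i> ^ n
         * of_real (real N powr (2 * k - 9/2 - a - real n)) * (- \<i>) powr (of_real (2 * k - 9/2 - a - real n)) * \<i>)"
    unfolding axis_coeff2_def by (simp add: power_mult_distrib algebra_simps)
  also have "\<dots> = of_real (gbinom (k - 2) (real n + 1/2)) * z ^ n * (\<i> powr (of_real (a + 1))
      * of_real (real N powr (2 * k - a - real n - 19/4)) * \<i> powr (of_real (2 * real n - k + 1/2)))"
    by (simp only: phase[unfolded power_one_right])
  finally show ?thesis by (simp only: mult_ac)
qed

lemma Pa_formula: "Pa k N a f z =
        \<i> powr (of_real (a + 1)) *
        (\<Sum>n = 0..nat \<lfloor>k - 5/2\<rfloor>.
           (of_real (gbinom (k - 2) (real n)) * of_nat N ^ n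
              * Lambda f (of_real (a + 1 - real n))
            + of_real (gbinom (k - 2) (real n + 1/2))
              * of_real (real N powr (2 * k - a - real n - 19/4))
              * \<i> powr (of_real (2 * real n - k + 1/2))
              * Lambda f (of_real (2 * k - 7/2 - a - real n))) * z ^ n)"
proof -
  have "(P * X * Z) * L1 + (P * Y * Z) * L2 = P * ((X * L1 + Y * L2) * Z)" for P X Y Z L1 L2 :: complex
    by (simp add: algebra_simps)
  then show ?thesis unfolding Pa_eq_Lambda_sum axis_coeff1_times_i axis_coeff2_times_i sum_distrib_left
    by (intro sum.cong refl)
qed

lemma Pa_polynomial: "\<exists>p :: complex poly. degree p \<le> nat \<lfloor>k - 5/2\<rfloor> \<and> (\<forall>z. Pa k N a f z = poly p z)"
proof -
  define c where "c n = \<i> powr (of_real (a + 1)) *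
           (of_real (gbinom (k - 2) (real n)) * of_nat N ^ n
              * Lambda f (of_real (a + 1 - real n))
            + of_real (gbinom (k - 2) (real n + 1/2))
              * of_real (real N powr (2 * k - a - real n - 19/4))
              * \<i> powr (of_real (2 * real n - k + 1/2))
              * Lambda f (of_real (2 * k - 7/2 - a - real n)))" for n
  define p where "p = (\<Sum>n = 0..nat \<lfloor>k - 5/2\<rfloor>. Polynomial.monom (c n) n)"
  have "degree p \<le> nat \<lfloor>k - 5/2\<rfloor>" unfolding p_def
    by (rule degree_sum_le) (auto intro: order_trans[OF degree_monom_le])
  moreover have "Pa k N a f z = poly p z" for z
    unfolding Pa_formula p_def poly_sum poly_monom c_def sum_distrib_left by (simp only: mult.assoc)
  ultimately show ?thesis by blast
qed

section \<open>\<open>P\<^sub>a\<close> and \<open>F\<^sub>a\<close> through a primitive of the integrand\<close>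

definition integrand :: "complex \<Rightarrow> complex \<Rightarrow> complex" where
  "integrand z w = f w * Phi k N a z w"

lemma integrand_holomorphic: "integrand z holomorphic_on {w. Im w > 0}"
  unfolding integrand_def[abs_def] by (intro holomorphic_on_mult f_holomorphic Phi_holomorphic)

lemma primitive_exists: "\<exists>G. \<forall>z w. Im w > 0 \<longrightarrow> (G z has_field_derivative integrand z w) (at w)"
proof -
  have *: "\<exists>G. \<forall>w. Im w > 0 \<longrightarrow> (G has_field_derivative integrand z w) (at w)" for z
  proof -
    obtain G where G: "\<And>w. w \<in> {w. Im w > 0} \<Longrightarrow> (G has_field_derivative integrand z w) (at w within {w. Im w > 0})"
      using holomorphic_convex_primitive'[OF convex_halfspace_Im_gt open_halfspace_Im_gt integrand_holomorphic]
      by blast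
    then have "(G has_field_derivative integrand z w) (at w)" if "Im w > 0" for w
      using that at_within_open[OF _ open_halfspace_Im_gt, of w] by fastforce
    then show ?thesis by blast
  qed
  show ?thesis by (rule choice) (use * in blast)
qed

definition prim :: "complex \<Rightarrow> complex \<Rightarrow> complex" where
  "prim = (SOME G. \<forall>z w. Im w > 0 \<longrightarrow> (G z has_field_derivative integrand z w) (at w))"

lemma prim_deriv: "Im w > 0 \<Longrightarrow> (prim z has_field_derivative integrand z w) (at w)"
  using someI_ex[OF primitive_exists] unfolding prim_def[symmetric] by blast

lemma integrand_decay: "\<exists>C Y. C > 0 \<and> Y \<ge> 1 \<and>
    (\<forall>w. Im w > Y \<longrightarrow> norm (integrand z w) \<le> C * exp (- 2 * pi * Im w) * norm w powr (2 * k))"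
proof -
  obtain C Y where C: "C > 0" and dec: "\<And>w. Im w > Y \<Longrightarrow> norm (f w) \<le> C * exp (- 2 * pi * Im w)"
    using f_exp_decay by blast
  obtain B where B: "\<And>w. Im w \<ge> 1 \<Longrightarrow> norm (Phi k N a z w) \<le> B * norm w powr (2 * k)"
    using Phi_bound[of z] by blast
  define B' where "B' = max B 0 + 1"
  have B': "B' > 0" by (simp add: B'_def)
  have "norm (integrand z w) \<le> (C * B') * exp (- 2 * pi * Im w) * norm w powr (2 * k)"
    if w: "Im w > max Y 1" for w
  proof -
    have "norm (integrand z w) = norm (f w) * norm (Phi k N a z w)" by (simp add: integrand_def norm_mult)
    also have "\<dots> \<le> (C * exp (- 2 * pi * Im w)) * (B' * norm w powr (2 * k))"
    proof (rule mult_mono)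
      have "norm (Phi k N a z w) \<le> B * norm w powr (2 * k)" using B w by simp
      also have "\<dots> \<le> B' * norm w powr (2 * k)" unfolding B'_def by (intro mult_right_mono) auto
      finally show "norm (Phi k N a z w) \<le> B' * norm w powr (2 * k)" .
    qed (use C dec w in auto)
    finally show ?thesis by (simp add: mult_ac)
  qed
  then show ?thesis using C B' by (intro exI[of _ "C * B'"] exI[of _ "max Y 1"]) auto
qed

lemma integrand_ray_exp_bound: assumes s: "Im s \<ge> 0"
  shows "eventually (\<lambda>t. norm (integrand z (s + \<i> * of_real t) * \<i>) \<le> exp (- pi * t)) at_top"
proof -
  obtain C Y where C: "C > 0" and Y: "Y \<ge> 1"
    and dec: "\<And>w. Im w > Y \<Longrightarrow> norm (integrand z w) \<le> C * exp (- 2 * pi * Im w) * norm w powr (2 * k)"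
    using integrand_decay[of z] by blast
  have "(\<lambda>t::real. (norm s + t) powr (2 * k) * exp (- 2 * pi * t)) \<in> o(\<lambda>t. exp (- pi * t))"
    by real_asymp
  then have "eventually (\<lambda>t. norm ((norm s + t) powr (2 * k) * exp (- 2 * pi * t)) \<le> (1 / C) * norm (exp (- pi * t))) at_top"
    using C by (intro landau_o.smallD) auto
  moreover have "eventually (\<lambda>t::real. t > Y) at_top" by (rule eventually_gt_at_top)
  ultimately show ?thesis
  proof eventually_elim
    case (elim t)
    define w where "w = s + \<i> * of_real t"
    have Iw: "Im w = Im s + t" by (simp add: w_def)
    have nw: "norm w \<le> norm s + t"
      unfolding w_def using norm_triangle_ineq[of s "\<i> * of_real t"] elim Y by (simp add: norm_mult)
    have "norm (integrand z w * \<i>) = norm (integrand z w)" by (simp add: norm_mult)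
    also have "\<dots> \<le> C * exp (- 2 * pi * Im w) * norm w powr (2 * k)" using dec[of w] Iw s elim by simp
    also have "\<dots> \<le> C * exp (- 2 * pi * t) * (norm s + t) powr (2 * k)"
    proof (intro mult_mono mult_left_mono)
      show "exp (- 2 * pi * Im w) \<le> exp (- 2 * pi * t)" using Iw s by simp
      show "norm w powr (2 * k) \<le> (norm s + t) powr (2 * k)" using nw k_gt by (intro powr_mono2) auto
    qed (use C in auto)
    also have "\<dots> = C * ((norm s + t) powr (2 * k) * exp (- 2 * pi * t))" by simp
    also have "\<dots> \<le> C * ((1 / C) * exp (- pi * t))" using elim(1) C by (intro mult_left_mono) auto
    finally show ?case using C by (simp add: w_def)
  qed
qed

lemma integrand_ray_continuous: assumes "Im s \<ge> 0"
  shows "continuous_on {t. Im s + t > 0} (\<lambda>t. integrand z (s + \<i> * of_real t) * \<i>)"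
proof -
  have "continuous_on {t. Im s + t > 0} (\<lambda>t. integrand z (s + \<i> * of_real t))"
    by (rule continuous_on_compose2[OF holomorphic_on_imp_continuous_on[OF integrand_holomorphic]])
       (auto intro!: continuous_intros)
  then show ?thesis by (intro continuous_intros)
qed

lemma prim_ray_deriv: assumes "Im s + t > 0"
  shows "((\<lambda>t. prim z (s + \<i> * of_real t)) has_vector_derivative (integrand z (s + \<i> * of_real t) * \<i>)) (at t)"
proof -
  have "((\<lambda>x. s + \<i> * x) has_field_derivative \<i>) (at (of_real t))" by (auto intro!: derivative_eq_intros)
  then have "((\<lambda>t. s + \<i> * of_real t) has_vector_derivative \<i>) (at t)" by (rule has_vector_derivative_real_field)
  moreover have "(prim z has_field_derivative integrand z (s + \<i> * of_real t)) (at (s + \<i> * of_real t))"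
    using assms by (intro prim_deriv) simp
  ultimately show ?thesis using field_vector_diff_chain_at by (fastforce simp: o_def mult.commute)
qed

lemma set_integrable_integrand_ray: assumes s: "Im s > 0"
  shows "set_integrable lborel {0..} (\<lambda>t. integrand z (s + \<i> * of_real t) * \<i>)"
proof -
  obtain T where T: "\<And>t. t \<ge> T \<Longrightarrow> norm (integrand z (s + \<i> * of_real t) * \<i>) \<le> 1 * exp (- pi * t)"
    using integrand_ray_exp_bound[of s z] s unfolding eventually_at_top_linorder by auto
  show ?thesis
    by (rule set_integrable_atLeast_exp_bound[OF _ _ T])
       (auto intro: continuous_on_subset[OF integrand_ray_continuous] simp: s less_imp_le add_pos_nonneg)
qed

lemma set_integrable_integrand_axis: "set_integrable lborel {0<..} (\<lambda>t. integrand z (\<i> * of_real t) * \<i>)"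
  using set_integrable_Pa_integrand[of z] by (simp add: integrand_def)

definition prim_at_infinity :: "complex \<Rightarrow> complex" where
  "prim_at_infinity z = prim z \<i> + (LBINT t:{1..}. integrand z (\<i> * of_real t) * \<i>)"

definition prim_at_zero :: "complex \<Rightarrow> complex" where
  "prim_at_zero z = prim z \<i> - (LBINT t:{0<..1}. integrand z (\<i> * of_real t) * \<i>)"

lemma prim_tendsto_at_infinity: "((\<lambda>T. prim z (\<i> * of_real T)) \<longlongrightarrow> prim_at_infinity z) at_top"
proof -
  have "((\<lambda>t. prim z (\<i> * of_real t)) \<longlongrightarrow> prim z (\<i> * of_real 1)
      + (LBINT t:{1..}. integrand z (\<i> * of_real t) * \<i>)) at_top"
  proof (rule tendsto_at_top_FTC)
    show "((\<lambda>t. prim z (\<i> * of_real t)) has_vector_derivative integrand z (\<i> * of_real t) * \<i>) (at t)"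
      if "t \<ge> 1" for t
      using prim_ray_deriv[of 0 t z] that by simp
    show "continuous_on {1..} (\<lambda>t. integrand z (\<i> * of_real t) * \<i>)"
      by (rule continuous_on_subset[OF integrand_ray_continuous[of 0 z, simplified]]) auto
    show "set_integrable lborel {1..} (\<lambda>t. integrand z (\<i> * of_real t) * \<i>)"
      by (rule set_integrable_subset[OF set_integrable_integrand_axis]) auto
  qed
  then show ?thesis by (simp add: prim_at_infinity_def)
qed

lemma prim_tendsto_at_zero: "((\<lambda>e. prim z (\<i> * of_real e)) \<longlongrightarrow> prim_at_zero z) (at_right 0)"
proof -
  have "((\<lambda>t. prim z (\<i> * of_real t)) \<longlongrightarrow> prim z (\<i> * of_real 1)
      - (LBINT t:{0<..1}. integrand z (\<i> * of_real t) * \<i>)) (at_right 0)"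
  proof (rule tendsto_at_right_0_FTC)
    show "((\<lambda>t. prim z (\<i> * of_real t)) has_vector_derivative integrand z (\<i> * of_real t) * \<i>) (at t)"
      if "t \<in> {0<..1}" for t
      using prim_ray_deriv[of 0 t z] that by simp
    show "continuous_on {0<..1} (\<lambda>t. integrand z (\<i> * of_real t) * \<i>)"
      by (rule continuous_on_subset[OF integrand_ray_continuous[of 0 z, simplified]]) auto
    show "set_integrable lborel {0<..1} (\<lambda>t. integrand z (\<i> * of_real t) * \<i>)"
      by (rule set_integrable_subset[OF set_integrable_integrand_axis]) auto
  qed simp
  then show ?thesis by (simp add: prim_at_zero_def)
qed

lemma Pa_eq_prim: "Pa k N a f z = prim_at_infinity z - prim_at_zero z"
proof -
  have "Pa k N a f z = (LBINT t:{0<..}. integrand z (\<i> * of_real t) * \<i>)"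
    unfolding Pa_def by (simp add: integrand_def)
  also have "{0<..} = {0<..1} \<union> {1::real..}" by auto
  also have "(LBINT t:{0<..1} \<union> {1..}. integrand z (\<i> * of_real t) * \<i>)
      = (LBINT t:{0<..1}. integrand z (\<i> * of_real t) * \<i>) + (LBINT t:{1..}. integrand z (\<i> * of_real t) * \<i>)"
  proof (rule set_integral_Un_AE)
    show "AE x in lborel. \<not> (x \<in> {0<..1} \<and> x \<in> {1::real..})"
      using AE_lborel_singleton[of "1::real"] by eventually_elim auto
    show "set_integrable lborel {0<..1} (\<lambda>t. integrand z (\<i> * of_real t) * \<i>)"
      by (rule set_integrable_subset[OF set_integrable_integrand_axis]) auto
    show "set_integrable lborel {1..} (\<lambda>t. integrand z (\<i> * of_real t) * \<i>)"
      by (rule set_integrable_subset[OF set_integrable_integrand_axis]) auto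
  qed auto
  finally show ?thesis by (simp add: prim_at_infinity_def prim_at_zero_def)
qed

text \<open>The primitive changes by \<open>O(|z| exp(-2 pi T) T^(2k))\<close> along the horizontal segment
  from \<open>iT\<close> to \<open>z + iT\<close>.\<close>

lemma prim_horizontal_difference_tendsto_0:
  assumes z: "Im z > 0"
  shows "((\<lambda>T. prim z (z + \<i> * of_real T) - prim z (\<i> * of_real T)) \<longlongrightarrow> 0) at_top"
proof -
  obtain C Y where C: "C > 0" and Y: "Y \<ge> 1"
    and dec: "\<And>w. Im w > Y \<Longrightarrow> norm (integrand z w) \<le> C * exp (- 2 * pi * Im w) * norm w powr (2 * k)"
    using integrand_decay[of z] by blast
  define B where "B T = C * exp (- 2 * pi * T) * (norm z + T) powr (2 * k)" for T
  have close: "norm (prim z (z + \<i> * of_real T) - prim z (\<i> * of_real T)) \<le> B T * norm z" if T: "T > Y" for T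
  proof -
    define S where "S = closed_segment (\<i> * of_real T) (z + \<i> * of_real T)"
    have S: "Im w \<ge> T \<and> norm w \<le> norm z + T" if "w \<in> S" for w
      using closed_segment_vertical_bounds[OF z _ that[unfolded S_def]] T Y by linarith
    have bnd: "norm (integrand z w) \<le> B T" if "w \<in> S" for w
    proof -
      have I: "Im w \<ge> T" and nw: "norm w \<le> norm z + T" using S[OF that] by auto
      have "norm (integrand z w) \<le> C * exp (- 2 * pi * Im w) * norm w powr (2 * k)"
        using dec I T by simp
      also have "\<dots> \<le> B T" unfolding B_def
        using I nw k_gt C by (intro mult_mono mult_left_mono powr_mono2) auto
      finally show ?thesis .
    qed
    have der: "(prim z has_field_derivative integrand z w) (at w within S)" if "w \<in> S" for w
      using S[OF that] T Y by (intro has_field_derivative_at_within[OF prim_deriv]) simp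
    have "norm (prim z (z + \<i> * of_real T) - prim z (\<i> * of_real T))
        \<le> B T * norm ((z + \<i> * of_real T) - \<i> * of_real T)"
      by (rule field_differentiable_bound[OF _ der bnd]) (simp_all add: S_def convex_closed_segment ends_in_segment)
    then show ?thesis by simp
  qed
  have "eventually (\<lambda>T. norm (prim z (z + \<i> * of_real T) - prim z (\<i> * of_real T)) \<le> B T * norm z) at_top"
    using eventually_gt_at_top[of Y] by (rule eventually_mono) (rule close)
  moreover have "((\<lambda>T::real. exp (- 2 * pi * T) * (norm z + T) powr (2 * k)) \<longlongrightarrow> 0) at_top"
    by real_asymp
  then have "((\<lambda>T. C * (exp (- 2 * pi * T) * (norm z + T) powr (2 * k)) * norm z) \<longlongrightarrow> C * 0 * norm z) at_top"
    by (intro tendsto_intros)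
  then have "((\<lambda>T. B T * norm z) \<longlongrightarrow> 0) at_top" by (simp add: B_def mult.assoc)
  ultimately show ?thesis by (rule Lim_null_comparison)
qed

lemma Fa_eq_prim: assumes z: "Im z > 0" shows "Fa k N a f z = prim_at_infinity z - prim z z"
proof -
  have "((\<lambda>T. prim z (z + \<i> * of_real T)) \<longlongrightarrow> prim z (z + \<i> * of_real 0)
      + (LBINT t:{0..}. integrand z (z + \<i> * of_real t) * \<i>)) at_top"
    by (rule tendsto_at_top_FTC[OF _ _ set_integrable_integrand_ray[OF z]])
       (use z in \<open>auto intro: prim_ray_deriv continuous_on_subset[OF integrand_ray_continuous]\<close>)
  moreover have "((\<lambda>T. (prim z (z + \<i> * of_real T) - prim z (\<i> * of_real T)) + prim z (\<i> * of_real T))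
      \<longlongrightarrow> 0 + prim_at_infinity z) at_top"
    by (intro tendsto_add prim_horizontal_difference_tendsto_0[OF z] prim_tendsto_at_infinity)
  ultimately have "prim z z + (LBINT t:{0..}. integrand z (z + \<i> * of_real t) * \<i>) = prim_at_infinity z"
    using tendsto_unique by force
  moreover have "Fa k N a f z = (LBINT t:{0..}. integrand z (z + \<i> * of_real t) * \<i>)"
    unfolding Fa_def integrand_def
    by (rule set_integral_discrete_difference[where X="{0}"]) (auto simp: mult.assoc)
  ultimately show ?thesis by (simp add: algebra_simps)
qed

section \<open>The Fricke relations\<close>

lemma Phi_fricke:
  assumes z: "z \<noteq> 0" and s: "Im s > 0"
  shows "fricke_factor k N m z s * Phi k N a (- 1 / (of_nat N * z)) (- 1 / (of_nat N * s)) = Phi k N a z s"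
proof -
  have "(\<Sum>n = 0..m. fricke_factor k N m z s * Phi_term1 k N a n (- 1 / (of_nat N * z)) (- 1 / (of_nat N * s)))
      = (\<Sum>n = 0..m. Phi_term2 k N a (m - n) z s)"
    by (intro sum.cong refl fricke_factor_Phi_term1[OF N_pos z s real_m]) auto
  also have "\<dots> = (\<Sum>n = 0..m. Phi_term2 k N a n z s)"
    by (subst (2) sum.atLeastAtMost_rev) simp
  finally have term1: "(\<Sum>n = 0..m. fricke_factor k N m z s * Phi_term1 k N a n (- 1 / (of_nat N * z)) (- 1 / (of_nat N * s)))
      = (\<Sum>n = 0..m. Phi_term2 k N a n z s)" .
  have "(\<Sum>n = 0..m. fricke_factor k N m z s * Phi_term2 k N a n (- 1 / (of_nat N * z)) (- 1 / (of_nat N * s)))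
      = (\<Sum>n = 0..m. Phi_term1 k N a (m - n) z s)"
    by (intro sum.cong refl fricke_factor_Phi_term2[OF N_pos z s real_m]) auto
  also have "\<dots> = (\<Sum>n = 0..m. Phi_term1 k N a n z s)"
    by (subst (2) sum.atLeastAtMost_rev) simp
  finally have term2: "(\<Sum>n = 0..m. fricke_factor k N m z s * Phi_term2 k N a n (- 1 / (of_nat N * z)) (- 1 / (of_nat N * s)))
      = (\<Sum>n = 0..m. Phi_term1 k N a n z s)" .
  show ?thesis
    unfolding Phi_split m_def[symmetric] sum_distrib_left distrib_left sum.distrib term1 term2
    by (rule add.commute)
qed

lemma i_powr_eq_power_m: "\<i> powr (complex_of_real (k - 5/2)) = \<i> ^ m"
proof -
  have "complex_of_real (k - 5/2) = of_nat m" using real_m by (metis of_real_of_nat_eq)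
  then show ?thesis by (simp add: powr_nat')
qed

lemma slash_int_WN: assumes z: "z \<noteq> 0"
  shows "slash_int (5/2 - k) (WN N) F z = (of_real (sqrt (real N)) * z) ^ m * F (- 1 / (of_nat N * z))"
proof -
  have sN: "sqrt (real N) \<noteq> 0" using N_pos by simp
  have NN: "complex_of_real (sqrt (real N)) * complex_of_real (sqrt (real N)) = of_nat N"
    by (simp flip: of_real_mult)
  have "(complex_of_real 0 * z + complex_of_real (- 1 / sqrt (real N)))
      / (complex_of_real (sqrt (real N)) * z + complex_of_real 0)
      = - 1 / (complex_of_real (sqrt (real N)) * complex_of_real (sqrt (real N)) * z)"
    using sN z by (simp add: field_simps)
  then have arg: "(complex_of_real 0 * z + complex_of_real (- 1 / sqrt (real N)))
      / (complex_of_real (sqrt (real N)) * z + complex_of_real 0) = - 1 / (of_nat N * z)"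
    unfolding NN .
  have "5/2 - k = - real m" using real_m by simp
  then have exponent: "- complex_of_real (5/2 - k) = of_nat m" by simp
  have "complex_of_real (sqrt (real N)) * z + complex_of_real 0 \<noteq> 0" using sN z by simp
  then show ?thesis
    unfolding slash_int_def WN_def prod.case arg exponent powr_nat'[OF disjI1] by simp
qed

definition fricke_defect :: "complex \<Rightarrow> complex \<Rightarrow> complex" where
  "fricke_defect z s = prim z s
     - \<i> ^ m * (of_real (sqrt (real N)) * z) ^ m * prim (- 1 / (of_nat N * z)) (- 1 / (of_nat N * s))"

lemma fricke_defect_deriv:
  assumes z: "Im z > 0" and s: "Im s > 0"
  shows "(fricke_defect z has_field_derivative 0) (at s)"
proof -
  define z' where "z' = - 1 / (of_nat N * z)"
  define c where "c = \<i> ^ m * (of_real (sqrt (real N)) * z) ^ m"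
  have s0: "s \<noteq> 0" using s by auto
  have N0: "(of_nat N :: complex) \<noteq> 0" using N_pos by simp
  have "((\<lambda>s. - 1 / (of_nat N * s)) has_field_derivative 1 / (of_nat N * s ^ 2)) (at s)"
    using s0 N0 by (auto intro!: derivative_eq_intros simp: field_simps power2_eq_square)
  moreover have "(prim z' has_field_derivative integrand z' (- 1 / (of_nat N * s))) (at (- 1 / (of_nat N * s)))"
    by (rule prim_deriv[OF Im_fricke_pos[OF N_pos s]])
  ultimately have "((\<lambda>s. c * prim z' (- 1 / (of_nat N * s)))
      has_field_derivative c * (integrand z' (- 1 / (of_nat N * s)) * (1 / (of_nat N * s ^ 2)))) (at s)"
    by (intro DERIV_cmult DERIV_chain2)
  then have D: "(fricke_defect z has_field_derivative
      integrand z s - c * (integrand z' (- 1 / (of_nat N * s)) * (1 / (of_nat N * s ^ 2)))) (at s)"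
    unfolding fricke_defect_def[abs_def] c_def z'_def by (intro DERIV_diff prim_deriv[OF s])
  have E: "c * (integrand z' (- 1 / (of_nat N * s)) * (1 / (of_nat N * s ^ 2))) = integrand z s"
  proof -
    have "c * (integrand z' (- 1 / (of_nat N * s)) * (1 / (of_nat N * s ^ 2)))
        = f s * (fricke_factor k N m z s * Phi k N a z' (- 1 / (of_nat N * s)))"
      unfolding integrand_def f_fricke[OF s] fricke_factor_def c_def using s0 N0 by (simp add: field_simps)
    also have "\<dots> = integrand z s"
      using z by (subst z'_def, subst Phi_fricke[OF _ s]) (auto simp: integrand_def)
    finally show ?thesis .
  qed
  show ?thesis using D unfolding E diff_self .
qed

lemma fricke_defect_eq_limits:
  assumes z: "Im z > 0"
  shows "fricke_defect z z = prim_at_zero z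
    - \<i> ^ m * (of_real (sqrt (real N)) * z) ^ m * prim_at_infinity (- 1 / (of_nat N * z))"
proof -
  define c where "c = \<i> ^ m * (of_real (sqrt (real N)) * z) ^ m"
  have D: "(fricke_defect z has_field_derivative 0) (at s within {w. Im w > 0})" if "s \<in> {w. Im w > 0}" for s
    using that by (intro has_field_derivative_at_within[OF fricke_defect_deriv[OF z]]) simp
  obtain c0 where "\<And>s. s \<in> {w. Im w > 0} \<Longrightarrow> fricke_defect z s = c0"
    using has_field_derivative_zero_constant[OF convex_halfspace_Im_gt D] by blast
  then have c0: "fricke_defect z s = c0" if "Im s > 0" for s using that by simp
  have "((\<lambda>e. prim (- 1 / (of_nat N * z)) (\<i> * of_real (1 / (real N * e))))
      \<longlongrightarrow> prim_at_infinity (- 1 / (of_nat N * z))) (at_right 0)"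
  proof (rule filterlim_compose[OF prim_tendsto_at_infinity])
    show "filterlim (\<lambda>e::real. 1 / (real N * e)) at_top (at_right 0)"
      using N_pos by real_asymp
  qed
  then have "((\<lambda>e. prim z (\<i> * of_real e) - c * prim (- 1 / (of_nat N * z)) (\<i> * of_real (1 / (real N * e))))
      \<longlongrightarrow> prim_at_zero z - c * prim_at_infinity (- 1 / (of_nat N * z))) (at_right 0)"
    by (intro tendsto_intros prim_tendsto_at_zero)
  moreover have "eventually (\<lambda>e. prim z (\<i> * of_real e) - c * prim (- 1 / (of_nat N * z)) (\<i> * of_real (1 / (real N * e)))
      = fricke_defect z z) (at_right 0)"
  proof (rule eventually_at_rightI[of 0 1])
    fix e :: real assume e: "e \<in> {0<..<1}"
    have "- 1 / (of_nat N * (\<i> * of_real e)) = \<i> * of_real (1 / (real N * e))"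
      using e N_pos by (simp add: field_simps)
    then show "prim z (\<i> * of_real e) - c * prim (- 1 / (of_nat N * z)) (\<i> * of_real (1 / (real N * e)))
        = fricke_defect z z"
      using c0[of "\<i> * of_real e"] c0[OF z] e by (simp add: fricke_defect_def c_def)
  qed simp
  ultimately have "((\<lambda>e::real. fricke_defect z z) \<longlongrightarrow> prim_at_zero z - c * prim_at_infinity (- 1 / (of_nat N * z)))
      (at_right 0)"
    by (rule Lim_transform_eventually)
  then show ?thesis
    using tendsto_unique[OF trivial_limit_at_right_real tendsto_const] by (simp add: c_def)
qed

lemma Fa_fricke_relation:
  assumes z: "Im z > 0"
  shows "- (\<i> powr (of_real (k - 5/2))) * slash_int (5/2 - k) (WN N) (Fa k N a f) z + Fa k N a f z
       = Pa k N a f z"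
proof -
  define z' where "z' = - 1 / (of_nat N * z)"
  define c where "c = \<i> ^ m * (of_real (sqrt (real N)) * z) ^ m"
  have z': "Im z' > 0" unfolding z'_def by (rule Im_fricke_pos[OF N_pos z])
  have z0: "z \<noteq> 0" using z by auto
  have "- (\<i> powr (of_real (k - 5/2))) * slash_int (5/2 - k) (WN N) (Fa k N a f) z + Fa k N a f z
      = Fa k N a f z - c * Fa k N a f z'"
    unfolding i_powr_eq_power_m slash_int_WN[OF z0] c_def z'_def by simp
  also have "\<dots> = prim_at_infinity z - fricke_defect z z - c * prim_at_infinity z'"
    unfolding Fa_eq_prim[OF z] Fa_eq_prim[OF z'] fricke_defect_def z'_def[symmetric] c_def[symmetric]
    by (simp add: algebra_simps)
  also have "\<dots> = Pa k N a f z"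
    unfolding fricke_defect_eq_limits[OF z] Pa_eq_prim c_def z'_def by simp
  finally show ?thesis .
qed

text \<open>Part (i) at \<open>z\<close> and at \<open>-1/(Nz)\<close>; the two automorphy factors multiply to \<open>(-1)^m\<close>.\<close>

lemma Pa_fricke_relation:
  assumes z: "Im z > 0"
  shows "\<i> ^ m * slash_int (5/2 - k) (WN N) (Pa k N a f) z + Pa k N a f z = 0"
proof -
  define z' where "z' = - 1 / (of_nat N * z)"
  have z': "Im z' > 0" unfolding z'_def by (rule Im_fricke_pos[OF N_pos z])
  have z0: "z \<noteq> 0" and z'0: "z' \<noteq> 0" using z z' by auto
  have N0: "(of_nat N :: complex) \<noteq> 0" using N_pos by simp
  have zz: "- 1 / (of_nat N * z') = z" unfolding z'_def using z0 N0 by (simp add: field_simps)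
  define A where "A = (\<i> :: complex) ^ m"
  define B where "B = (of_real (sqrt (real N)) * z) ^ m"
  define B' where "B' = (of_real (sqrt (real N)) * z') ^ m"
  have Pz: "Pa k N a f z = Fa k N a f z - A * (B * Fa k N a f z')"
    using Fa_fricke_relation[OF z] unfolding i_powr_eq_power_m slash_int_WN[OF z0] A_def B_def z'_def
    by (simp add: algebra_simps)
  have Pz': "Pa k N a f z' = Fa k N a f z' - A * (B' * Fa k N a f z)"
    using Fa_fricke_relation[OF z'] unfolding i_powr_eq_power_m slash_int_WN[OF z'0] A_def B'_def zz
    by (simp add: algebra_simps)
  have "A * A = (- 1) ^ m" unfolding A_def by (simp add: power_mult_distrib[symmetric])
  moreover have "complex_of_real (sqrt (real N)) * z * (complex_of_real (sqrt (real N)) * z') = - 1"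
  proof -
    have "complex_of_real (sqrt (real N)) * complex_of_real (sqrt (real N)) = of_nat N"
      by (simp flip: of_real_mult)
    then show ?thesis unfolding z'_def using z0 N0 by (simp add: field_simps)
  qed
  then have "B * B' = (- 1) ^ m" unfolding B_def B'_def by (simp add: power_mult_distrib[symmetric])
  ultimately have AB: "(A * A) * (B * B') = 1" by (simp add: power_mult_distrib[symmetric])
  have slash: "slash_int (5/2 - k) (WN N) (Pa k N a f) z = B * Pa k N a f z'"
    unfolding slash_int_WN[OF z0] B_def z'_def ..
  have "A * (B * (Fa k N a f z' - A * (B' * Fa k N a f z))) + (Fa k N a f z - A * (B * Fa k N a f z'))
      = Fa k N a f z - (A * A) * (B * B') * Fa k N a f z"
    by (simp add: algebra_simps)
  also have "\<dots> = 0" unfolding AB by simp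
  finally show ?thesis unfolding slash Pz' Pz A_def[symmetric] .
qed

lemma Pa_character_relation:
  assumes chi: "is_character N chi" "chi (WN N) = \<i> powr (of_real (5/2 - k))" and z: "Im z > 0"
  shows "slash_int_chi (5/2 - k) chi (WN N) (Pa k N a f) z + slash_int_chi (5/2 - k) chi idmat (Pa k N a f) z = 0"
proof -
  have "cnj (chi (WN N)) = \<i> ^ m"
    using chi(2) cnj_i_powr[of "5/2 - k"] i_powr_eq_power_m by simp
  moreover have "cnj (chi idmat) = 1" using character_idmat[OF chi(1)] by simp
  ultimately show ?thesis
    unfolding slash_int_chi_def slash_int_idmat using Pa_fricke_relation[OF z] by simp
qed

lemma i_power_m_eq_1: assumes "(k - 5/2) / 4 \<in> \<int>" shows "\<i> ^ m = 1"
proof -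
  from assms obtain j :: int where "(k - 5/2) / 4 = of_int j" by (rule Ints_cases)
  then have "real m = of_int (4 * j)" using real_m by simp
  then have "int m = 4 * j" by (metis of_int_eq_iff of_int_of_nat_eq)
  then have "4 dvd m" by presburger
  then obtain q where "m = 4 * q" by (auto elim: dvdE)
  then have "\<i> ^ m = ((\<i> ^ 2) ^ 2) ^ q" by (simp add: power_mult)
  then show ?thesis by simp
qed

end

theorem theorem3p1:
  fixes k :: real and N :: nat and a :: real and f :: "complex \<Rightarrow> complex"
  assumes k_half: "k - 1/2 \<in> \<int>"
    and k_gt: "k > 5/2"
    and N_pos: "N > 0"
    and N_4: "4 dvd N"
    and f_cusp: "cusp_form_star k N f"
    and a_lo: "0 \<le> a"
    and a_hi: "a \<le> 2 * k - 9/2"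
  shows
    "(\<forall>z\<in>upper_half_plane.
        - (\<i> powr (of_real (k - 5/2))) * slash_int (5/2 - k) (WN N) (Fa k N a f) z
        + Fa k N a f z = Pa k N a f z)
   \<and> (\<forall>chi. is_character N chi \<and> chi (WN N) = \<i> powr (of_real (5/2 - k)) \<longrightarrow>
        (\<forall>z\<in>upper_half_plane.
           slash_int_chi (5/2 - k) chi (WN N) (Pa k N a f) z
           + slash_int_chi (5/2 - k) chi idmat (Pa k N a f) z = 0))
   \<and> ((k - 5/2) / 4 \<in> \<int> \<longrightarrow>
        (\<forall>z\<in>upper_half_plane.
           slash_int (5/2 - k) (WN N) (Pa k N a f) z
           + slash_int (5/2 - k) idmat (Pa k N a f) z = 0))
   \<and> (\<exists>p :: complex poly. degree p \<le> nat \<lfloor>k - 5/2\<rfloor> \<and> (\<forall>z. Pa k N a f z = poly p z))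
   \<and> (\<forall>z. Pa k N a f z =
        \<i> powr (of_real (a + 1)) *
        (\<Sum>n = 0..nat \<lfloor>k - 5/2\<rfloor>.
           (of_real (gbinom (k - 2) (real n)) * of_nat N ^ n
              * Lambda f (of_real (a + 1 - real n))
            + of_real (gbinom (k - 2) (real n + 1/2))
              * of_real (real N powr (2 * k - a - real n - 19/4))
              * \<i> powr (of_real (2 * real n - k + 1/2))
              * Lambda f (of_real (2 * k - 7/2 - a - real n))) * z ^ n))"
proof -
  interpret fricke_period k N f a
    by unfold_locales (use assms in auto)
  show ?thesis
  proof (intro conjI ballI allI impI)
    show "- (\<i> powr (of_real (k - 5/2))) * slash_int (5/2 - k) (WN N) (Fa k N a f) z + Fa k N a f z
        = Pa k N a f z" if "z \<in> upper_half_plane" for z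
      using that Fa_fricke_relation by (simp add: upper_half_plane_def)
    show "slash_int_chi (5/2 - k) chi (WN N) (Pa k N a f) z + slash_int_chi (5/2 - k) chi idmat (Pa k N a f) z = 0"
      if "is_character N chi \<and> chi (WN N) = \<i> powr (of_real (5/2 - k))" "z \<in> upper_half_plane" for chi z
      using that Pa_character_relation by (simp add: upper_half_plane_def)
    show "slash_int (5/2 - k) (WN N) (Pa k N a f) z + slash_int (5/2 - k) idmat (Pa k N a f) z = 0"
      if "(k - 5/2) / 4 \<in> \<int>" "z \<in> upper_half_plane" for z
      using that Pa_fricke_relation[of z] i_power_m_eq_1
      by (simp add: upper_half_plane_def slash_int_idmat)
    show "\<exists>p :: complex poly. degree p \<le> nat \<lfloor>k - 5/2\<rfloor> \<and> (\<forall>z. Pa k N a f z = poly p z)"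
      by (rule Pa_polynomial)
  qed (rule Pa_formula)
qed

end
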